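(* Let $\psi$ be an admissible modulus and $\varphi$ an admissible order function with $I_\psi\subset(0,1)$ and $I_{\varphi\psi}\subset(0,1)\cup(1,2)\cup(2,3)$, and let $u\in C^{\varphi\psi}(\mathbb{R}^d)$, $f\in C^\psi(\mathbb{R}^d)$. Suppose that for each $\varepsilon>0$ there exist $r>0$ and $c_1\ge1$ (depending on $\varepsilon$) such that $$\|u\eta_{r,x_0}\|_{C^{\varphi\psi}}\le c_1\big(\|f\|_{C^\psi}+\|u\|_{C^0}\big)+\varepsilon\|u\|_{C^{\varphi\psi}}\quad\text{for all }x_0\in\mathbb{R}^d.$$ Then there exists a constant $C$ such that $\|u\|_{C^{\varphi\psi}}\le C(\|f\|_{C^\psi}+\|u\|_{C^0})$.
   Context: Almost increasing/decreasing: $g:(0,1]\to(0,\infty)$ is almost increasing if $c\,g(r)\le g(R)$ for some $c\in(0,1]$ and all $0<r\le R\le1$, almost decreasing if $g(R)\le Cg(r)$ for some $C\ge1$ and all $0<r\le R\le1$. $M_g=\inf\{\alpha: g(r)/r^\alpha\text{ almost decreasing}\}$, $m_g=\sup\{\alpha: g(r)/r^\alpha\text{ almost increasing}\}$, $I_g=[m_g,M_g]$. An admissible modulus is $\psi:(0,1]\to(0,\infty)$, $\psi(1)=1$, $\psi(r)\to0$ as $r\to0+$. An admissible order function is a smooth $\varphi:(0,\infty)\to(0,\infty)$, $\varphi(1)=1$, such that $\phi(r)=\varphi(r^{-1/2})^{-1}$ is a Bernstein function ($\phi\ge0$, $C^\infty$, $(-1)^n\phi^{(n)}\le0$ for $n\ge1$)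 and $a_1\lambda^{2\delta_1}\varphi(r)\le\varphi(\lambda r)\le a_2\lambda^{2\delta_2}\varphi(r)$ for all $\lambda\ge1,r>0$, some $0<\delta_1\le\delta_2<1$, $a_1\in(0,1]$, $a_2\ge1$. Indices of $\varphi$ refer to its restriction to $(0,1]$; $\varphi\psi$ is the product on $(0,1]$. $\|f\|_{C^0}=\sup|f|$, $\|D^jf\|_{C^0}=\max_{|\gamma|=j}\|D^\gamma f\|_{C^0}$; $[f]_{C^{-j;g}}=\sup_x\sup_{0<|h|\le1}\frac{|f(x+h)-f(x)|}{g(|h|)|h|^{-j}}$. If $m_g\in(k,k+1]$, $k\in\mathbb{N}_0$, $C^g(\mathbb{R}^d)$ is the set of continuous $f$ with $D^\gamma f$ bounded continuous for $|\gamma|\le k$ and $[D^\gamma f]_{C^{-k;g}}<\infty$ for $|\gamma|=k$, norm $\|f\|_{C^g}=\sum_{j\le k}\|D^jf\|_{C^0}+\max_{|\gamma|=k}[D^\gamma f]_{C^{-k;g}}$. Cut-off: $\bar\eta\in C^\infty_c(\mathbb{R}^d)$ is a fixed function with values in $[0,1]$, equal to $1$ on $B(0,1)$ and $0$ outside $B(0,2)$; $\eta_{r,x_0}(x)=\bar\eta((x-x_0)/r)$. *)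

theory Defs
  imports "HOL-Analysis.Analysis"
begin

definition almost_increasing :: "(real \<Rightarrow> real) \<Rightarrow> bool" where
  "almost_increasing g \<longleftrightarrow>
     (\<exists>c. 0 < c \<and> c \<le> 1 \<and> (\<forall>r R. 0 < r \<and> r \<le> R \<and> R \<le> 1 \<longrightarrow> c * g r \<le> g R))"

definition almost_decreasing :: "(real \<Rightarrow> real) \<Rightarrow> bool" where
  "almost_decreasing g \<longleftrightarrow>
     (\<exists>C. 1 \<le> C \<and> (\<forall>r R. 0 < r \<and> r \<le> R \<and> R \<le> 1 \<longrightarrow> g R \<le> C * g r))"

text \<open>Indices are taken in the extended reals so that inf/sup of empty or
unbounded sets have their natural values (+/- infinity).\<close>

definition upper_index :: "(real \<Rightarrow> real) \<Rightarrow> ereal" where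
  "upper_index g = Inf {ereal \<alpha> | \<alpha>. almost_decreasing (\<lambda>r. g r / r powr \<alpha>)}"

definition lower_index :: "(real \<Rightarrow> real) \<Rightarrow> ereal" where
  "lower_index g = Sup {ereal \<alpha> | \<alpha>. almost_increasing (\<lambda>r. g r / r powr \<alpha>)}"

definition index_interval :: "(real \<Rightarrow> real) \<Rightarrow> real set" where
  "index_interval g = {x. lower_index g \<le> ereal x \<and> ereal x \<le> upper_index g}"

definition admissible_modulus :: "(real \<Rightarrow> real) \<Rightarrow> bool" where
  "admissible_modulus \<psi> \<longleftrightarrow>
     (\<forall>r. 0 < r \<and> r \<le> 1 \<longrightarrow> 0 < \<psi> r) \<and> \<psi> 1 = 1 \<and> (\<psi> \<longlongrightarrow> 0) (at_right 0)"

definition smooth_pos :: "(real \<Rightarrow> real) \<Rightarrow> bool" where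
  "smooth_pos f \<longleftrightarrow> (\<forall>n x. 0 < x \<longrightarrow> ((deriv ^^ n) f) differentiable (at x))"

definition bernstein :: "(real \<Rightarrow> real) \<Rightarrow> bool" where
  "bernstein \<phi> \<longleftrightarrow> (\<forall>x>0. 0 \<le> \<phi> x) \<and> smooth_pos \<phi> \<and>
     (\<forall>n x. 1 \<le> n \<and> 0 < x \<longrightarrow> (-1) ^ n * (deriv ^^ n) \<phi> x \<le> 0)"

definition admissible_order_function :: "(real \<Rightarrow> real) \<Rightarrow> bool" where
  "admissible_order_function \<phi> \<longleftrightarrow>
     smooth_pos \<phi> \<and> (\<forall>r>0. 0 < \<phi> r) \<and> \<phi> 1 = 1 \<and>
     bernstein (\<lambda>r. inverse (\<phi> (r powr (-1/2)))) \<and>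
     (\<exists>\<delta>1 \<delta>2 a1 a2. 0 < \<delta>1 \<and> \<delta>1 \<le> \<delta>2 \<and> \<delta>2 < 1 \<and> 0 < a1 \<and> a1 \<le> 1 \<and> 1 \<le> a2 \<and>
        (\<forall>s r. 1 \<le> s \<and> 0 < r \<longrightarrow>
            a1 * s powr (2*\<delta>1) * \<phi> r \<le> \<phi> (s * r) \<and>
            \<phi> (s * r) \<le> a2 * s powr (2*\<delta>2) * \<phi> r))"

definition pd :: "'a::euclidean_space \<Rightarrow> ('a \<Rightarrow> real) \<Rightarrow> 'a \<Rightarrow> real" where
  "pd v f x = deriv (\<lambda>t. f (x + t *\<^sub>R v)) 0"

text \<open>D^gamma for a multi-index given as a list of basis vectors (|gamma| = length).\<close>
fun Dl :: "'a::euclidean_space list \<Rightarrow> ('a \<Rightarrow> real) \<Rightarrow> 'a \<Rightarrow> real" where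
  "Dl [] f = f"
| "Dl (v # vs) f = pd v (Dl vs f)"

definition multi_indices :: "nat \<Rightarrow> 'a::euclidean_space list set" where
  "multi_indices j = {\<gamma>. set \<gamma> \<subseteq> Basis \<and> length \<gamma> = j}"

definition sup_norm :: "('a \<Rightarrow> real) \<Rightarrow> real" where
  "sup_norm f = (SUP x. \<bar>f x\<bar>)"

definition Dnorm :: "nat \<Rightarrow> ('a::euclidean_space \<Rightarrow> real) \<Rightarrow> real" where
  "Dnorm j f = (SUP \<gamma>\<in>multi_indices j. sup_norm (Dl \<gamma> f))"

definition holder_quotients :: "nat \<Rightarrow> (real \<Rightarrow> real) \<Rightarrow> ('a::real_normed_vector \<Rightarrow> real) \<Rightarrow> real set" where
  "holder_quotients j g f =
     {\<bar>f (x + h) - f x\<bar> / (g (norm h) * norm h powr (- real j)) | x h. 0 < norm h \<and> norm h \<le> 1}"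

definition holder_semi :: "nat \<Rightarrow> (real \<Rightarrow> real) \<Rightarrow> ('a::real_normed_vector \<Rightarrow> real) \<Rightarrow> real" where
  "holder_semi j g f = Sup (holder_quotients j g f)"

definition holder_order :: "(real \<Rightarrow> real) \<Rightarrow> nat" where
  "holder_order g = (THE k::nat. ereal (real k) < lower_index g \<and> lower_index g \<le> ereal (real k + 1))"

definition Cg :: "(real \<Rightarrow> real) \<Rightarrow> ('a::euclidean_space \<Rightarrow> real) set" where
  "Cg g = {f. let k = holder_order g in
      continuous_on UNIV f \<and>
      (\<forall>\<gamma> v x. set \<gamma> \<subseteq> Basis \<and> length \<gamma> < k \<and> v \<in> Basis \<longrightarrow>
          (\<lambda>t. Dl \<gamma> f (x + t *\<^sub>R v)) differentiable (at 0)) \<and>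
      (\<forall>\<gamma>. set \<gamma> \<subseteq> Basis \<and> length \<gamma> \<le> k \<longrightarrow>
          continuous_on UNIV (Dl \<gamma> f) \<and> bounded (range (Dl \<gamma> f))) \<and>
      (\<forall>\<gamma>\<in>multi_indices k. bdd_above (holder_quotients k g (Dl \<gamma> f)))}"

definition Cnorm :: "(real \<Rightarrow> real) \<Rightarrow> ('a::euclidean_space \<Rightarrow> real) \<Rightarrow> real" where
  "Cnorm g f = (let k = holder_order g in
      (\<Sum>j\<le>k. Dnorm j f) + (SUP \<gamma>\<in>multi_indices k. holder_semi k g (Dl \<gamma> f)))"

definition smooth_fun :: "('a::euclidean_space \<Rightarrow> real) \<Rightarrow> bool" where
  "smooth_fun f \<longleftrightarrow> (\<forall>\<gamma>. set \<gamma> \<subseteq> Basis \<longrightarrow> continuous_on UNIV (Dl \<gamma> f) \<and>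
      (\<forall>v x. v \<in> Basis \<longrightarrow> (\<lambda>t. Dl \<gamma> f (x + t *\<^sub>R v)) differentiable (at 0)))"

definition cutoff :: "('a::euclidean_space \<Rightarrow> real) \<Rightarrow> bool" where
  "cutoff \<eta> \<longleftrightarrow> smooth_fun \<eta> \<and> (\<forall>x. 0 \<le> \<eta> x \<and> \<eta> x \<le> 1) \<and>
     (\<forall>x\<in>ball 0 1. \<eta> x = 1) \<and> (\<forall>x. x \<notin> ball 0 2 \<longrightarrow> \<eta> x = 0)"

definition eta_rx :: "('a::euclidean_space \<Rightarrow> real) \<Rightarrow> real \<Rightarrow> 'a \<Rightarrow> 'a \<Rightarrow> real" where
  "eta_rx \<eta> r x0 x = \<eta> ((1 / r) *\<^sub>R (x - x0))"

end

(*
  Write g = phi psi and k for the order of C^g (m_g in (k, k+1]).  As phi is bounded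
  on (0,1] and psi tends to 0, so does g; hence M_g >= 0 and [m_g, M_g] is empty only
  if m_g = infinity.

  If m_g = infinity, then g(t) t^(-k) = O(t^2), so the increments of the k-th
  derivatives of u are O(|h|^2): they are constant, and since every derivative is
  bounded, all derivatives of positive order vanish and ||u|| <= (k+1) sup|u|.

  Otherwise I_g avoids the integers, which forces M_g < k+1 and therefore
  g(t) t^(-k) >= c0 t.  This makes Lipschitz functions Hoelder for the weight, so
  u eta_{r,x0} lies in C^g, and as it agrees with u near x0 the localized estimate
  bounds sup|D^j u| and the quotients of D^k u for |h| < r.  Quotients with |h| >= r
  are at most 2 sup|D^k u| / (c0 r).  Using the hypothesis once at a scale r1 with
  epsilon = 1/(4(k+2)) and once more with epsilon = c0 r1 / 8 for these sup-norms gives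
  ||u|| <= C (||f|| + sup|u|) + ||u|| / 2.
*)

theory Submission
  imports Defs
begin

section \<open>Directional derivatives\<close>

definition Dl_differentiable_upto :: "nat \<Rightarrow> ('a::euclidean_space \<Rightarrow> real) \<Rightarrow> bool" where
  "Dl_differentiable_upto k F \<longleftrightarrow>
     (\<forall>\<gamma> v x. set \<gamma> \<subseteq> Basis \<and> length \<gamma> < k \<and> v \<in> Basis \<longrightarrow>
        (\<lambda>t. Dl \<gamma> F (x + t *\<^sub>R v)) differentiable (at 0))"

lemma Dl_cong_open:
  fixes F G :: "'a::euclidean_space \<Rightarrow> real"
  assumes "open U" and "\<And>y. y \<in> U \<Longrightarrow> F y = G y" and "x \<in> U"
  shows "Dl \<gamma> F x = Dl \<gamma> G x"
  using assms(3)
proof (induction \<gamma> arbitrary: x)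
  case Nil
  then show ?case using assms(2) by simp
next
  case (Cons v \<gamma>)
  have "open ((\<lambda>t::real. x + t *\<^sub>R v) -` U)"
    using assms(1) by (intro continuous_open_vimage continuous_intros)
  then have "eventually (\<lambda>t. x + t *\<^sub>R v \<in> U) (nhds (0::real))"
    using eventually_nhds_in_open[of _ 0] Cons.prems by fastforce
  then have "eventually (\<lambda>t. Dl \<gamma> F (x + t *\<^sub>R v) = Dl \<gamma> G (x + t *\<^sub>R v)) (nhds 0)"
    by eventually_elim (rule Cons.IH)
  then show ?case by (simp add: pd_def deriv_cong_ev)
qed

lemma Dl_zero [simp]: "Dl \<gamma> (\<lambda>x::'a::euclidean_space. 0::real) = (\<lambda>x. 0)"
  by (induction \<gamma>) (auto simp: pd_def fun_eq_iff)

lemma has_real_derivative_along_line: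
  fixes F :: "'a::euclidean_space \<Rightarrow> real"
  assumes "\<And>y. (\<lambda>t. F (y + t *\<^sub>R v)) differentiable (at 0)"
  shows "((\<lambda>s. F (x + s *\<^sub>R v)) has_real_derivative pd v F (x + s *\<^sub>R v)) (at s)"
proof -
  have "((\<lambda>t. F ((x + s *\<^sub>R v) + t *\<^sub>R v)) has_real_derivative pd v F (x + s *\<^sub>R v)) (at 0)"
    using assms unfolding pd_def by (simp add: DERIV_deriv_iff_real_differentiable)
  then have "((\<lambda>t. F (x + (t + s) *\<^sub>R v)) has_real_derivative pd v F (x + s *\<^sub>R v)) (at 0)"
    by (simp add: scaleR_add_left add_ac)
  then show ?thesis using DERIV_shift[of "\<lambda>s. F (x + s *\<^sub>R v)" _ 0 s] by simp
qed

lemma lipschitz_along_line: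
  fixes F :: "'a::euclidean_space \<Rightarrow> real"
  assumes "\<And>y. (\<lambda>t. F (y + t *\<^sub>R v)) differentiable (at 0)" and "\<And>y. \<bar>pd v F y\<bar> \<le> M"
  shows "\<bar>F (x + t *\<^sub>R v) - F x\<bar> \<le> M * \<bar>t\<bar>"
  using field_differentiable_bound[of UNIV "\<lambda>s. F (x + s *\<^sub>R v)" "\<lambda>s. pd v F (x + s *\<^sub>R v)" M t 0]
    has_real_derivative_along_line[OF assms(1)] assms(2) by simp

lemma has_real_derivative_sum_list:
  "(\<And>p. p \<in> set L \<Longrightarrow> (f p has_real_derivative f' p) (at x)) \<Longrightarrow>
   ((\<lambda>t. \<Sum>p\<leftarrow>L. f p t) has_real_derivative (\<Sum>p\<leftarrow>L. f' p)) (at x)"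
  by (induction L) (auto intro!: DERIV_add)

lemma pd_sum_list_mult:
  fixes a b :: "'i \<Rightarrow> 'a::euclidean_space \<Rightarrow> real"
  assumes "\<And>p. p \<in> set L \<Longrightarrow> (\<lambda>t. a p (x + t *\<^sub>R v)) differentiable (at 0)"
    and "\<And>p. p \<in> set L \<Longrightarrow> (\<lambda>t. b p (x + t *\<^sub>R v)) differentiable (at 0)"
  shows "pd v (\<lambda>y. \<Sum>p\<leftarrow>L. a p y * b p y) x = (\<Sum>p\<leftarrow>L. pd v (a p) x * b p x + a p x * pd v (b p) x)"
proof -
  have "((\<lambda>t. a p (x + t *\<^sub>R v) * b p (x + t *\<^sub>R v)) has_real_derivative
          pd v (a p) x * b p x + a p x * pd v (b p) x) (at 0)" if "p \<in> set L" for p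
  proof -
    have "((\<lambda>t. a p (x + t *\<^sub>R v)) has_real_derivative pd v (a p) x) (at 0)"
      "((\<lambda>t. b p (x + t *\<^sub>R v)) has_real_derivative pd v (b p) x) (at 0)"
      using assms that unfolding pd_def by (simp_all add: DERIV_deriv_iff_real_differentiable)
    from DERIV_mult[OF this] show ?thesis by (simp add: mult.commute)
  qed
  then show ?thesis by (simp add: pd_def DERIV_imp_deriv has_real_derivative_sum_list)
qed

lemma Dl_mult_expansion:
  fixes u e :: "'a::euclidean_space \<Rightarrow> real"
  assumes du: "Dl_differentiable_upto k u" and de: "Dl_differentiable_upto k e"
    and "set \<gamma> \<subseteq> Basis" "length \<gamma> \<le> k"
  obtains L where
    "\<And>p. p \<in> set L \<Longrightarrow> set (fst p) \<subseteq> Basis \<and> set (snd p) \<subseteq> Basis \<and>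
                          length (fst p) + length (snd p) = length \<gamma>"
    "Dl \<gamma> (\<lambda>x. u x * e x) = (\<lambda>x. \<Sum>p\<leftarrow>L. Dl (fst p) u x * Dl (snd p) e x)"
proof -
  have "\<exists>L. (\<forall>p\<in>set L. set (fst p) \<subseteq> Basis \<and> set (snd p) \<subseteq> Basis \<and>
                        length (fst p) + length (snd p) = length \<gamma>) \<and>
            Dl \<gamma> (\<lambda>x. u x * e x) = (\<lambda>x. \<Sum>p\<leftarrow>L. Dl (fst p) u x * Dl (snd p) e x)"
    using assms(3,4)
  proof (induction \<gamma>)
    case Nil
    show ?case by (intro exI[of _ "[([], [])]"]) auto
  next
    case (Cons v \<gamma>)
    then obtain L where
      L: "\<forall>p\<in>set L. set (fst p) \<subseteq> Basis \<and> set (snd p) \<subseteq> Basis \<and>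
                    length (fst p) + length (snd p) = length \<gamma>" and
      IH: "Dl \<gamma> (\<lambda>x. u x * e x) = (\<lambda>x. \<Sum>p\<leftarrow>L. Dl (fst p) u x * Dl (snd p) e x)"
      by auto
    have v: "v \<in> Basis" and short: "length \<gamma> < k" using Cons.prems by auto
    define L' where "L' = map (\<lambda>p. (v # fst p, snd p)) L @ map (\<lambda>p. (fst p, v # snd p)) L"
    have "Dl (v # \<gamma>) (\<lambda>x. u x * e x) x = (\<Sum>p\<leftarrow>L'. Dl (fst p) u x * Dl (snd p) e x)" for x
    proof -
      have "Dl (v # \<gamma>) (\<lambda>x. u x * e x) x = pd v (\<lambda>y. \<Sum>p\<leftarrow>L. Dl (fst p) u y * Dl (snd p) e y) x"
        by (simp add: IH)
      also have "\<dots> = (\<Sum>p\<leftarrow>L. pd v (Dl (fst p) u) x * Dl (snd p) e x + Dl (fst p) u x * pd v (Dl (snd p) e) x)"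
        using du de L v short by (intro pd_sum_list_mult) (auto simp: Dl_differentiable_upto_def)
      finally show ?thesis by (simp add: L'_def sum_list_addf o_def)
    qed
    moreover have "\<forall>p\<in>set L'. set (fst p) \<subseteq> Basis \<and> set (snd p) \<subseteq> Basis \<and>
        length (fst p) + length (snd p) = length (v # \<gamma>)"
      using L v unfolding L'_def by fastforce
    ultimately show ?case by blast
  qed
  then show ?thesis by (elim exE conjE) (rule that, blast+)
qed

lemma constant_if_increments_quadratic:
  fixes w :: "'a::real_normed_vector \<Rightarrow> real"
  assumes "\<And>x h. 0 < norm h \<Longrightarrow> norm h \<le> 1 \<Longrightarrow> \<bar>w (x + h) - w x\<bar> \<le> K * (norm h)\<^sup>2"
  shows "w y = w x"
proof -
  define d where "d = y - x"
  define f where "f t = w (x + t *\<^sub>R d)" for t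
  have "(f has_real_derivative 0) (at t)" for t
  proof (cases "d = 0")
    case True
    then have "f = (\<lambda>_. w x)" by (simp add: f_def fun_eq_iff)
    then show ?thesis by simp
  next
    case False
    have "eventually (\<lambda>h. norm ((f (t + h) - f t) / h) \<le> K * (norm d)\<^sup>2 * \<bar>h\<bar>) (at 0)"
      unfolding eventually_at
    proof (intro exI[of _ "1 / norm d"] conjI ballI impI)
      fix h :: real assume h: "h \<noteq> 0 \<and> dist h 0 < 1 / norm d"
      have "f (t + h) - f t = w ((x + t *\<^sub>R d) + h *\<^sub>R d) - w (x + t *\<^sub>R d)"
        by (simp add: f_def scaleR_add_left add.assoc)
      also have "\<bar>\<dots>\<bar> \<le> K * (norm (h *\<^sub>R d))\<^sup>2"
        using h False assms[of "h *\<^sub>R d" "x + t *\<^sub>R d"] by (simp add: field_simps)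
      finally show "norm ((f (t + h) - f t) / h) \<le> K * (norm d)\<^sup>2 * \<bar>h\<bar>"
        using h by (simp add: divide_le_eq power2_eq_square mult_ac)
    qed (use False in simp)
    moreover have "((\<lambda>h. K * (norm d)\<^sup>2 * \<bar>h\<bar>) \<longlongrightarrow> 0) (at (0::real))"
      by (intro tendsto_mult_right_zero tendsto_rabs_zero tendsto_ident_at)
    ultimately show ?thesis unfolding DERIV_def by (rule Lim_null_comparison)
  qed
  then have "f 1 = f 0" using DERIV_isconst_all by blast
  then show ?thesis by (simp add: f_def d_def)
qed

section \<open>Bounded functions, Lipschitz and Hoelder estimates\<close>

definition bounded_fun :: "('a \<Rightarrow> real) \<Rightarrow> bool" where
  "bounded_fun F \<longleftrightarrow> (\<exists>M. \<forall>x. \<bar>F x\<bar> \<le> M)"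

lemma bounded_fun_add: "bounded_fun a \<Longrightarrow> bounded_fun b \<Longrightarrow> bounded_fun (\<lambda>x. a x + b x)"
  unfolding bounded_fun_def by (meson abs_triangle_ineq add_mono order.trans)

lemma bounded_fun_mult: "bounded_fun a \<Longrightarrow> bounded_fun b \<Longrightarrow> bounded_fun (\<lambda>x. a x * b x)"
proof -
  assume "bounded_fun a" "bounded_fun b"
  then obtain Ma Mb where "\<And>x. \<bar>a x\<bar> \<le> Ma" "\<And>x. \<bar>b x\<bar> \<le> Mb"
    by (auto simp: bounded_fun_def)
  then have "\<bar>a x * b x\<bar> \<le> Ma * Mb" for x
    by (simp add: abs_mult mult_mono')
  then show ?thesis by (auto simp: bounded_fun_def)
qed

lemma bounded_fun_sum_list:
  "(\<And>p. p \<in> set L \<Longrightarrow> bounded_fun (f p)) \<Longrightarrow> bounded_fun (\<lambda>x. \<Sum>p\<leftarrow>L. f p x)"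
proof (induction L)
  case Nil
  show ?case by (auto simp: bounded_fun_def)
qed (auto intro: bounded_fun_add)

lemma lipschitz_from_partials:
  fixes F :: "'a::euclidean_space \<Rightarrow> real"
  assumes "\<And>v y. v \<in> Basis \<Longrightarrow> (\<lambda>t. F (y + t *\<^sub>R v)) differentiable (at 0)"
    and "\<And>v y. v \<in> Basis \<Longrightarrow> \<bar>pd v F y\<bar> \<le> M"
  shows "(M * DIM('a))-lipschitz_on UNIV F"
proof -
  have along_sum: "\<bar>F (x + (\<Sum>b\<in>B. c b *\<^sub>R b)) - F x\<bar> \<le> M * (\<Sum>b\<in>B. \<bar>c b\<bar>)"
    if "finite B" "B \<subseteq> Basis" for B c x
    using that
  proof (induction B arbitrary: x rule: finite_induct)
    case empty
    then show ?case by simp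
  next
    case (insert b B)
    let ?y = "x + (\<Sum>b\<in>B. c b *\<^sub>R b)"
    have "\<bar>F (?y + c b *\<^sub>R b) - F x\<bar> \<le> \<bar>F (?y + c b *\<^sub>R b) - F ?y\<bar> + \<bar>F ?y - F x\<bar>"
      by linarith
    also have "\<dots> \<le> M * \<bar>c b\<bar> + M * (\<Sum>b\<in>B. \<bar>c b\<bar>)"
      using insert lipschitz_along_line[of F b M] assms by (intro add_mono) auto
    finally show ?case using insert(1,2) by (simp add: add_ac distrib_left)
  qed
  have M: "0 \<le> M"
    using assms(2)[of "SOME b. b \<in> Basis"] abs_ge_zero order.trans
    by (metis nonempty_Basis some_in_eq)
  show ?thesis
  proof (rule lipschitz_onI)
    fix x y :: 'a
    have "\<bar>F (y + (\<Sum>b\<in>Basis. ((x - y) \<bullet> b) *\<^sub>R b)) - F y\<bar> \<le> M * (\<Sum>b\<in>Basis. \<bar>(x - y) \<bullet> b\<bar>)"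
      by (rule along_sum) auto
    also have "\<dots> \<le> M * (\<Sum>b\<in>(Basis::'a set). norm (x - y))"
      using M by (intro mult_left_mono sum_mono) (auto simp: Basis_le_norm)
    finally show "dist (F x) (F y) \<le> M * DIM('a) * dist x y"
      by (simp add: euclidean_representation dist_norm dist_real_def mult_ac)
  qed (use M in simp)
qed

lemma lipschitz_if_bounded_partials:
  fixes F :: "'a::euclidean_space \<Rightarrow> real"
  assumes "\<And>v y. v \<in> Basis \<Longrightarrow> (\<lambda>t. F (y + t *\<^sub>R v)) differentiable (at 0)"
    and "\<And>v. v \<in> Basis \<Longrightarrow> bounded_fun (pd v F)"
  obtains L where "L-lipschitz_on UNIV F"
proof -
  obtain M where M: "\<And>v y. v \<in> Basis \<Longrightarrow> \<bar>pd v F y\<bar> \<le> M v"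
    using assms(2) unfolding bounded_fun_def by metis
  have "\<bar>pd v F y\<bar> \<le> (\<Sum>b\<in>Basis. \<bar>M b\<bar>)" if "v \<in> Basis" for v y
    using M[OF that, of y] member_le_sum[OF that, of "\<lambda>b. \<bar>M b\<bar>"] by auto
  from lipschitz_from_partials[OF assms(1) this] that show ?thesis by blast
qed

lemma partial_eq_zero_if_constant:
  fixes F :: "'a::euclidean_space \<Rightarrow> real"
  assumes "\<And>y. (\<lambda>t. F (y + t *\<^sub>R v)) differentiable (at 0)"
    and "bounded_fun F" and "\<And>y. pd v F y = c"
  shows "c = 0"
proof (rule ccontr)
  assume "c \<noteq> 0"
  obtain M where M: "\<And>x. \<bar>F x\<bar> \<le> M" using assms(2) by (auto simp: bounded_fun_def)
  have "((\<lambda>s. F (0 + s *\<^sub>R v)) has_real_derivative c) (at t)" for t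
    using has_real_derivative_along_line[OF assms(1), of 0 t] assms(3) by simp
  from DERIV_diff[OF this DERIV_cmult_Id[of c]]
  have "F (t *\<^sub>R v) - c * t = F 0" for t
    using DERIV_isconst_all[of "\<lambda>s. F (0 + s *\<^sub>R v) - c * s" t 0] by simp
  from this[of "(2 * M + 1) / c"] \<open>c \<noteq> 0\<close> M[of 0] M[of "((2 * M + 1) / c) *\<^sub>R v"]
  show False by simp
qed

lemma constant_if_partials_zero:
  fixes F :: "'a::euclidean_space \<Rightarrow> real"
  assumes "\<And>v y. v \<in> Basis \<Longrightarrow> (\<lambda>t. F (y + t *\<^sub>R v)) differentiable (at 0)"
    and "\<And>v y. v \<in> Basis \<Longrightarrow> pd v F y = 0"
  shows "F x = F y"
  using lipschitz_onD[OF lipschitz_from_partials[of F 0], of x y] assms by simp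

definition holder_estimate :: "(real \<Rightarrow> real) \<Rightarrow> nat \<Rightarrow> ('a::real_normed_vector \<Rightarrow> real) \<Rightarrow> bool" where
  "holder_estimate g k F \<longleftrightarrow> (\<exists>K. \<forall>x h. 0 < norm h \<and> norm h \<le> 1 \<longrightarrow>
     \<bar>F (x + h) - F x\<bar> \<le> K * (g (norm h) * norm h powr - real k))"

lemma bdd_above_holder_quotients_iff:
  assumes "\<And>t. 0 < t \<Longrightarrow> t \<le> 1 \<Longrightarrow> 0 < g t"
  shows "bdd_above (holder_quotients k g F) \<longleftrightarrow> holder_estimate g k F"
proof
  assume "bdd_above (holder_quotients k g F)"
  then obtain K where K: "\<And>q. q \<in> holder_quotients k g F \<Longrightarrow> q \<le> K"
    by (auto simp: bdd_above_def)
  show "holder_estimate g k F" unfolding holder_estimate_def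
  proof (intro exI allI impI)
    fix x h :: 'a assume h: "0 < norm h \<and> norm h \<le> 1"
    then have "\<bar>F (x + h) - F x\<bar> / (g (norm h) * norm h powr - real k) \<le> K"
      by (intro K) (auto simp: holder_quotients_def)
    then show "\<bar>F (x + h) - F x\<bar> \<le> K * (g (norm h) * norm h powr - real k)"
      using assms h by (simp add: divide_le_eq)
  qed
next
  assume "holder_estimate g k F"
  then obtain K where "\<forall>x h. 0 < norm h \<and> norm h \<le> 1 \<longrightarrow>
      \<bar>F (x + h) - F x\<bar> \<le> K * (g (norm h) * norm h powr - real k)"
    by (auto simp: holder_estimate_def)
  then show "bdd_above (holder_quotients k g F)"
    unfolding bdd_above_def holder_quotients_def using assms
    by (intro exI[of _ K]) (auto simp: divide_le_eq)
qed

lemma holder_estimate_add: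
  assumes "holder_estimate g k a" and "holder_estimate g k b"
  shows "holder_estimate g k (\<lambda>x. a x + b x)"
proof -
  obtain Ka Kb where
    Ka: "\<And>x h. 0 < norm h \<Longrightarrow> norm h \<le> 1 \<Longrightarrow>
      \<bar>a (x + h) - a x\<bar> \<le> Ka * (g (norm h) * norm h powr - real k)" and
    Kb: "\<And>x h. 0 < norm h \<Longrightarrow> norm h \<le> 1 \<Longrightarrow>
      \<bar>b (x + h) - b x\<bar> \<le> Kb * (g (norm h) * norm h powr - real k)"
    using assms unfolding holder_estimate_def by blast
  have "\<bar>a (x + h) + b (x + h) - (a x + b x)\<bar> \<le> (Ka + Kb) * (g (norm h) * norm h powr - real k)"
    if "0 < norm h" "norm h \<le> 1" for x h
    using Ka[OF that, of x] Kb[OF that, of x] by (simp add: distrib_right abs_le_iff)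
  then show ?thesis unfolding holder_estimate_def by blast
qed

lemma holder_estimate_mult:
  assumes "bounded_fun a" "bounded_fun b" "holder_estimate g k a" "holder_estimate g k b"
  shows "holder_estimate g k (\<lambda>x. a x * b x)"
proof -
  obtain Ma Mb where Ma: "\<And>x. \<bar>a x\<bar> \<le> Ma" and Mb: "\<And>x. \<bar>b x\<bar> \<le> Mb"
    using assms(1,2) by (auto simp: bounded_fun_def)
  obtain Ka Kb where
    Ka: "\<And>x h. 0 < norm h \<Longrightarrow> norm h \<le> 1 \<Longrightarrow>
      \<bar>a (x + h) - a x\<bar> \<le> Ka * (g (norm h) * norm h powr - real k)" and
    Kb: "\<And>x h. 0 < norm h \<Longrightarrow> norm h \<le> 1 \<Longrightarrow>
      \<bar>b (x + h) - b x\<bar> \<le> Kb * (g (norm h) * norm h powr - real k)"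
    using assms(3,4) unfolding holder_estimate_def by blast
  have "\<bar>a (x + h) * b (x + h) - a x * b x\<bar> \<le> (Ka * Mb + Ma * Kb) * (g (norm h) * norm h powr - real k)"
    if h: "0 < norm h" "norm h \<le> 1" for x h
  proof -
    define W where "W = g (norm h) * norm h powr - real k"
    have "a (x + h) * b (x + h) - a x * b x = (a (x + h) - a x) * b (x + h) + a x * (b (x + h) - b x)"
      by (simp add: algebra_simps)
    then have "\<bar>a (x + h) * b (x + h) - a x * b x\<bar>
        \<le> \<bar>a (x + h) - a x\<bar> * \<bar>b (x + h)\<bar> + \<bar>a x\<bar> * \<bar>b (x + h) - b x\<bar>"
      by (metis abs_mult abs_triangle_ineq)
    also have "\<dots> \<le> (Ka * W) * Mb + Ma * (Kb * W)"
      using Ka[OF h, of x] Kb[OF h, of x] Ma[of x] Mb[of "x + h"] unfolding W_def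
      by (intro add_mono mult_mono) (auto intro: order.trans[OF abs_ge_zero])
    finally show ?thesis unfolding W_def by (simp add: algebra_simps)
  qed
  then show ?thesis unfolding holder_estimate_def by (intro exI[of _ "Ka * Mb + Ma * Kb"]) auto
qed

lemma holder_estimate_sum_list:
  "(\<And>p. p \<in> set L \<Longrightarrow> holder_estimate g k (f p)) \<Longrightarrow> holder_estimate g k (\<lambda>x. \<Sum>p\<leftarrow>L. f p x)"
proof (induction L)
  case Nil
  show ?case unfolding holder_estimate_def by (intro exI[of _ 0]) simp
qed (auto intro: holder_estimate_add)

lemma lipschitz_imp_holder_estimate:
  assumes "0 < c0" and "\<And>t. 0 < t \<Longrightarrow> t \<le> 1 \<Longrightarrow> c0 * t \<le> g t * t powr - real k"
    and "L-lipschitz_on UNIV F"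
  shows "holder_estimate g k F"
proof -
  have "\<bar>F (x + h) - F x\<bar> \<le> L / c0 * (g (norm h) * norm h powr - real k)"
    if "0 < norm h" "norm h \<le> 1" for x h
  proof -
    have "\<bar>F (x + h) - F x\<bar> \<le> L * norm h"
      using lipschitz_onD[OF assms(3), of "x + h" x] by (simp add: dist_norm dist_real_def)
    also have "\<dots> = L / c0 * (c0 * norm h)" using assms(1) by simp
    also have "\<dots> \<le> L / c0 * (g (norm h) * norm h powr - real k)"
      using assms that lipschitz_on_nonneg[OF assms(3)] by (intro mult_left_mono) auto
    finally show ?thesis .
  qed
  then show ?thesis unfolding holder_estimate_def by blast
qed

section \<open>Rescaled cut-off functions\<close>

lemma has_real_derivative_Dl_eta_rx:
  fixes \<eta> :: "'a::euclidean_space \<Rightarrow> real"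
  assumes "smooth_fun \<eta>" "0 < r" "set \<gamma> \<subseteq> Basis" "v \<in> Basis"
    and Dl_\<gamma>: "\<And>y. Dl \<gamma> (eta_rx \<eta> r x0) y = (1/r)^length \<gamma> * Dl \<gamma> \<eta> ((1/r) *\<^sub>R (y - x0))"
  shows "((\<lambda>t. Dl \<gamma> (eta_rx \<eta> r x0) (x + t *\<^sub>R v)) has_real_derivative
           (1/r)^Suc (length \<gamma>) * Dl (v # \<gamma>) \<eta> ((1/r) *\<^sub>R (x - x0))) (at 0)"
proof -
  define y where "y = (1/r) *\<^sub>R (x - x0)"
  define G where "G s = Dl \<gamma> \<eta> (y + s *\<^sub>R v)" for s
  have "G differentiable (at 0)" using assms(1,3,4) unfolding smooth_fun_def G_def by blast
  then have dG: "(G has_real_derivative Dl (v # \<gamma>) \<eta> y) (at 0)"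
    using DERIV_deriv_iff_real_differentiable[of G 0] unfolding G_def[abs_def] by (simp add: pd_def)
  have dq: "((\<lambda>t. t / r) has_real_derivative 1 / r) (at 0)"
    using assms(2) by (auto intro!: derivative_eq_intros)
  have "((\<lambda>t. G (t / r)) has_real_derivative Dl (v # \<gamma>) \<eta> y * (1 / r)) (at 0)"
    using DERIV_chain2[where f = G and g = "\<lambda>t. t / r" and x = 0 and s = UNIV, OF _ dq] dG by simp
  then have "((\<lambda>t. (1/r)^length \<gamma> * G (t / r)) has_real_derivative
      (1/r)^length \<gamma> * (Dl (v # \<gamma>) \<eta> y * (1 / r))) (at 0)"
    by (rule DERIV_cmult)
  moreover have "Dl \<gamma> (eta_rx \<eta> r x0) (x + t *\<^sub>R v) = (1/r)^length \<gamma> * G (t / r)" for t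
  proof -
    have "(1/r) *\<^sub>R (x + t *\<^sub>R v - x0) = y + (t / r) *\<^sub>R v"
      unfolding y_def by (simp add: algebra_simps divide_inverse)
    then show ?thesis by (simp add: Dl_\<gamma> G_def)
  qed
  ultimately show ?thesis by (simp add: y_def mult_ac)
qed

lemma Dl_eta_rx:
  fixes \<eta> :: "'a::euclidean_space \<Rightarrow> real"
  assumes "smooth_fun \<eta>" "0 < r" "set \<gamma> \<subseteq> Basis"
  shows "Dl \<gamma> (eta_rx \<eta> r x0) x = (1/r)^length \<gamma> * Dl \<gamma> \<eta> ((1/r) *\<^sub>R (x - x0))"
  using assms(3)
proof (induction \<gamma> arbitrary: x)
  case Nil
  then show ?case by (simp add: eta_rx_def)
next
  case (Cons v \<gamma>)
  then show ?case
    using DERIV_imp_deriv[OF has_real_derivative_Dl_eta_rx[OF assms(1,2), of \<gamma> v x0 x]]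
    by (simp add: pd_def)
qed

lemma Dl_differentiable_upto_eta_rx:
  fixes \<eta> :: "'a::euclidean_space \<Rightarrow> real"
  assumes "smooth_fun \<eta>" "0 < r"
  shows "Dl_differentiable_upto k (eta_rx \<eta> r x0)"
  using has_real_derivative_Dl_eta_rx[OF assms _ _ Dl_eta_rx[OF assms]]
  unfolding Dl_differentiable_upto_def real_differentiable_def by blast

lemma bounded_fun_Dl_cutoff:
  fixes \<eta> :: "'a::euclidean_space \<Rightarrow> real"
  assumes "cutoff \<eta>" "set \<gamma> \<subseteq> Basis"
  shows "bounded_fun (Dl \<gamma> \<eta>)"
proof -
  have "continuous_on UNIV (Dl \<gamma> \<eta>)"
    using assms unfolding cutoff_def smooth_fun_def by blast
  then have "compact (Dl \<gamma> \<eta> ` cball 0 2)"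
    by (rule compact_continuous_image[OF continuous_on_subset]) auto
  then obtain M where M: "\<And>x. x \<in> cball 0 2 \<Longrightarrow> \<bar>Dl \<gamma> \<eta> x\<bar> \<le> M"
    by (metis compact_imp_bounded bounded_iff image_eqI real_norm_def)
  have "Dl \<gamma> \<eta> x = Dl \<gamma> (\<lambda>x. 0) x" if "x \<notin> cball 0 2" for x
    using assms that by (intro Dl_cong_open[of "- cball 0 2"]) (auto simp: cutoff_def)
  then have "\<bar>Dl \<gamma> \<eta> x\<bar> \<le> max M 0" for x
    using M[of x] by (cases "x \<in> cball 0 2") auto
  then show ?thesis unfolding bounded_fun_def by blast
qed

lemma bounded_fun_Dl_eta_rx:
  fixes \<eta> :: "'a::euclidean_space \<Rightarrow> real"
  assumes "cutoff \<eta>" "0 < r" "set \<gamma> \<subseteq> Basis"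
  shows "bounded_fun (Dl \<gamma> (eta_rx \<eta> r x0))"
proof -
  obtain M where M: "\<And>y. \<bar>Dl \<gamma> \<eta> y\<bar> \<le> M"
    using bounded_fun_Dl_cutoff[OF assms(1,3)] by (auto simp: bounded_fun_def)
  have "\<bar>Dl \<gamma> (eta_rx \<eta> r x0) x\<bar> \<le> (1/r)^length \<gamma> * M" for x
    using assms M[of "(1/r) *\<^sub>R (x - x0)"]
    by (simp add: Dl_eta_rx cutoff_def abs_mult mult_left_mono)
  then show ?thesis unfolding bounded_fun_def by blast
qed

lemma lipschitz_Dl_eta_rx:
  fixes \<eta> :: "'a::euclidean_space \<Rightarrow> real"
  assumes "cutoff \<eta>" "0 < r" "set \<gamma> \<subseteq> Basis"
  obtains L where "L-lipschitz_on UNIV (Dl \<gamma> (eta_rx \<eta> r x0))"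
proof (rule lipschitz_if_bounded_partials)
  have "smooth_fun \<eta>" using assms(1) by (simp add: cutoff_def)
  then show "(\<lambda>t. Dl \<gamma> (eta_rx \<eta> r x0) (y + t *\<^sub>R v)) differentiable (at 0)" if "v \<in> Basis" for v y
    using Dl_differentiable_upto_eta_rx[OF _ assms(2), of \<eta> "Suc (length \<gamma>)"] assms(3) that
    by (auto simp: Dl_differentiable_upto_def)
  show "bounded_fun (pd v (Dl \<gamma> (eta_rx \<eta> r x0)))" if "v \<in> Basis" for v
    using bounded_fun_Dl_eta_rx[OF assms(1,2), of "v # \<gamma>"] assms(3) that by simp
qed

lemma eta_rx_eq_one:
  fixes \<eta> :: "'a::euclidean_space \<Rightarrow> real"
  assumes "cutoff \<eta>" "0 < r" "y \<in> ball x0 r"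
  shows "eta_rx \<eta> r x0 y = 1"
proof -
  have "norm ((1/r) *\<^sub>R (y - x0)) < 1"
    using assms(2,3) by (simp add: dist_norm norm_minus_commute divide_less_eq)
  then show ?thesis using assms(1) unfolding cutoff_def eta_rx_def by simp
qed

section \<open>The norm of \<open>C\<^sup>g\<close>\<close>

definition Cg_bounded :: "(real \<Rightarrow> real) \<Rightarrow> nat \<Rightarrow> ('a::euclidean_space \<Rightarrow> real) \<Rightarrow> bool" where
  "Cg_bounded g k F \<longleftrightarrow>
     (\<forall>\<gamma>. set \<gamma> \<subseteq> Basis \<and> length \<gamma> \<le> k \<longrightarrow> bounded_fun (Dl \<gamma> F)) \<and>
     (\<forall>\<gamma>\<in>multi_indices k. bdd_above (holder_quotients k g (Dl \<gamma> F)))"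

lemma CgD:
  assumes "u \<in> Cg g"
  shows "Dl_differentiable_upto (holder_order g) u" "Cg_bounded g (holder_order g) u"
  using assms
  unfolding Cg_def Let_def Dl_differentiable_upto_def Cg_bounded_def bounded_fun_def bounded_iff
  by auto

lemma holder_estimate_Dl:
  assumes gpos: "\<And>t. 0 < t \<Longrightarrow> t \<le> 1 \<Longrightarrow> 0 < g t"
    and "0 < c0" and "\<And>t. 0 < t \<Longrightarrow> t \<le> 1 \<Longrightarrow> c0 * t \<le> g t * t powr - real k"
    and du: "Dl_differentiable_upto k u" and bu: "Cg_bounded g k u"
    and \<alpha>: "set \<alpha> \<subseteq> Basis" "length \<alpha> \<le> k"
  shows "holder_estimate g k (Dl \<alpha> u)"
proof (cases "length \<alpha> < k")
  case True
  obtain L where "L-lipschitz_on UNIV (Dl \<alpha> u)"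
  proof (rule lipschitz_if_bounded_partials)
    show "(\<lambda>t. Dl \<alpha> u (y + t *\<^sub>R v)) differentiable (at 0)" if "v \<in> Basis" for v y
      using du \<alpha> True that by (auto simp: Dl_differentiable_upto_def)
    show "bounded_fun (pd v (Dl \<alpha> u))" if "v \<in> Basis" for v
    proof -
      have "set (v # \<alpha>) \<subseteq> Basis \<and> length (v # \<alpha>) \<le> k" using \<alpha> True that by auto
      then have "bounded_fun (Dl (v # \<alpha>) u)" using bu unfolding Cg_bounded_def by blast
      then show ?thesis by simp
    qed
  qed
  then show ?thesis using lipschitz_imp_holder_estimate assms(2,3) by blast
next
  case False
  then have "\<alpha> \<in> multi_indices k" using \<alpha> by (simp add: multi_indices_def)
  then show ?thesis
    using bu by (simp add: Cg_bounded_def bdd_above_holder_quotients_iff gpos)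
qed

lemma Cg_bounded_mult_eta_rx:
  fixes u :: "'a::euclidean_space \<Rightarrow> real"
  assumes gpos: "\<And>t. 0 < t \<Longrightarrow> t \<le> 1 \<Longrightarrow> 0 < g t"
    and "0 < c0" and low: "\<And>t. 0 < t \<Longrightarrow> t \<le> 1 \<Longrightarrow> c0 * t \<le> g t * t powr - real k"
    and du: "Dl_differentiable_upto k u" and bu: "Cg_bounded g k u"
    and "cutoff \<eta>" "0 < r"
  shows "Cg_bounded g k (\<lambda>x. u x * eta_rx \<eta> r x0 x)"
proof -
  let ?e = "eta_rx \<eta> r x0"
  have de: "Dl_differentiable_upto k ?e"
    using Dl_differentiable_upto_eta_rx assms(6,7) by (auto simp: cutoff_def)
  have "bounded_fun (Dl \<gamma> (\<lambda>x. u x * ?e x)) \<and> holder_estimate g k (Dl \<gamma> (\<lambda>x. u x * ?e x))"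
    if \<gamma>: "set \<gamma> \<subseteq> Basis" "length \<gamma> \<le> k" for \<gamma>
  proof -
    obtain L where L: "\<And>p. p \<in> set L \<Longrightarrow> set (fst p) \<subseteq> Basis \<and> set (snd p) \<subseteq> Basis \<and>
                          length (fst p) + length (snd p) = length \<gamma>"
      and expand: "Dl \<gamma> (\<lambda>x. u x * ?e x) = (\<lambda>x. \<Sum>p\<leftarrow>L. Dl (fst p) u x * Dl (snd p) ?e x)"
      using Dl_mult_expansion[OF du de \<gamma>] by blast
    have "bounded_fun (Dl (fst p) u)" "holder_estimate g k (Dl (fst p) u)"
      "bounded_fun (Dl (snd p) ?e)" "holder_estimate g k (Dl (snd p) ?e)" if "p \<in> set L" for p
    proof -
      have \<alpha>: "set (fst p) \<subseteq> Basis" "length (fst p) \<le> k" and \<beta>: "set (snd p) \<subseteq> Basis"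
        using L[OF that] \<gamma> by auto
      show "bounded_fun (Dl (fst p) u)" using bu \<alpha> by (simp add: Cg_bounded_def)
      show "holder_estimate g k (Dl (fst p) u)" by (rule holder_estimate_Dl[OF gpos assms(2) low du bu \<alpha>])
      show "bounded_fun (Dl (snd p) ?e)" by (rule bounded_fun_Dl_eta_rx[OF assms(6,7) \<beta>])
      show "holder_estimate g k (Dl (snd p) ?e)"
        using lipschitz_Dl_eta_rx[OF assms(6,7) \<beta>] lipschitz_imp_holder_estimate[OF assms(2) low] by blast
    qed
    then show ?thesis unfolding expand
      by (auto intro!: bounded_fun_sum_list holder_estimate_sum_list bounded_fun_mult holder_estimate_mult)
  qed
  note product = this
  show ?thesis unfolding Cg_bounded_def
  proof (intro conjI allI impI ballI)
    fix \<gamma> :: "'a list" assume "set \<gamma> \<subseteq> Basis \<and> length \<gamma> \<le> k"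
    then show "bounded_fun (Dl \<gamma> (\<lambda>x. u x * ?e x))" using product by blast
  next
    fix \<gamma> :: "'a list" assume "\<gamma> \<in> multi_indices k"
    then have "holder_estimate g k (Dl \<gamma> (\<lambda>x. u x * ?e x))"
      using product by (simp add: multi_indices_def)
    then show "bdd_above (holder_quotients k g (Dl \<gamma> (\<lambda>x. u x * ?e x)))"
      by (simp add: bdd_above_holder_quotients_iff gpos)
  qed
qed

lemma multi_indices_finite: "finite (multi_indices j :: 'a::euclidean_space list set)"
  unfolding multi_indices_def by (rule finite_lists_length_eq[OF finite_Basis])

lemma multi_indices_nonempty: "multi_indices j \<noteq> ({} :: 'a::euclidean_space list set)"
proof -
  obtain b :: 'a where "b \<in> Basis" using nonempty_Basis by blast
  then have "replicate j b \<in> multi_indices j" by (auto simp: multi_indices_def)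
  then show ?thesis by blast
qed

lemma holder_quotients_nonempty: "holder_quotients k g (F :: 'a::euclidean_space \<Rightarrow> real) \<noteq> {}"
proof -
  obtain b :: 'a where "b \<in> Basis" using nonempty_Basis by blast
  then have "\<bar>F (0 + b) - F 0\<bar> / (g (norm b) * norm b powr - real k) \<in> holder_quotients k g F"
    unfolding holder_quotients_def by fastforce
  then show ?thesis by blast
qed

lemma holder_quotients_nonneg:
  assumes "\<And>t. 0 < t \<Longrightarrow> t \<le> 1 \<Longrightarrow> 0 < g t" and "q \<in> holder_quotients k g F"
  shows "0 \<le> q"
proof -
  obtain x h where "q = \<bar>F (x + h) - F x\<bar> / (g (norm h) * norm h powr - real k)"
    and "0 < norm h" "norm h \<le> 1"
    using assms(2) unfolding holder_quotients_def by blast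
  then show ?thesis using assms(1)[of "norm h"] by simp
qed

lemma abs_le_sup_norm: "bounded_fun F \<Longrightarrow> \<bar>F y\<bar> \<le> sup_norm F"
proof -
  assume "bounded_fun F"
  then have "bdd_above (range (\<lambda>x. \<bar>F x\<bar>))" by (auto simp: bounded_fun_def intro: bdd_aboveI2)
  then show ?thesis unfolding sup_norm_def by (rule cSUP_upper[OF UNIV_I])
qed

lemma Cnorm_ge_summands:
  fixes F :: "'a::euclidean_space \<Rightarrow> real" and g :: "real \<Rightarrow> real"
  defines "k \<equiv> holder_order g"
  assumes gpos: "\<And>t. 0 < t \<Longrightarrow> t \<le> 1 \<Longrightarrow> 0 < g t" and F: "Cg_bounded g k F"
  shows "j \<le> k \<Longrightarrow> Dnorm j F \<le> Cnorm g F"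
    and "\<gamma> \<in> multi_indices k \<Longrightarrow> holder_semi k g (Dl \<gamma> F) \<le> Cnorm g F"
proof -
  define S where "S = (SUP \<gamma>\<in>multi_indices k. holder_semi k g (Dl \<gamma> F))"
  have Cnorm_eq: "Cnorm g F = (\<Sum>j\<le>k. Dnorm j F) + S"
    by (simp add: Cnorm_def Let_def S_def k_def)
  have Dnorm_nonneg: "0 \<le> Dnorm j F" if "j \<le> k" for j
  proof -
    obtain \<gamma> :: "'a list" where \<gamma>: "\<gamma> \<in> multi_indices j" using multi_indices_nonempty by blast
    then have "0 \<le> sup_norm (Dl \<gamma> F)"
      using F that abs_le_sup_norm[of "Dl \<gamma> F" 0] by (auto simp: Cg_bounded_def multi_indices_def)
    also have "\<dots> \<le> Dnorm j F"
      unfolding Dnorm_def using \<gamma> by (intro cSUP_upper bdd_above_finite finite_imageI multi_indices_finite)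
    finally show ?thesis .
  qed
  have semi_le_S: "holder_semi k g (Dl \<gamma> F) \<le> S" if "\<gamma> \<in> multi_indices k" for \<gamma>
    unfolding S_def using that by (intro cSUP_upper bdd_above_finite finite_imageI multi_indices_finite)
  have semi_nonneg: "0 \<le> holder_semi k g (Dl \<gamma> F)" if "\<gamma> \<in> multi_indices k" for \<gamma>
  proof -
    obtain q where q: "q \<in> holder_quotients k g (Dl \<gamma> F)" using holder_quotients_nonempty by blast
    have "q \<le> holder_semi k g (Dl \<gamma> F)"
      unfolding holder_semi_def using F that q by (intro cSup_upper) (auto simp: Cg_bounded_def)
    then show ?thesis using holder_quotients_nonneg[OF gpos q] by linarith
  qed
  have S_nonneg: "0 \<le> S"
    using multi_indices_nonempty semi_le_S semi_nonneg by (meson ex_in_conv order.trans)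
  show "Dnorm j F \<le> Cnorm g F" if "j \<le> k"
    using that Dnorm_nonneg S_nonneg member_le_sum[of j "{..k}" "\<lambda>j. Dnorm j F"]
    unfolding Cnorm_eq by force
  show "holder_semi k g (Dl \<gamma> F) \<le> Cnorm g F" if "\<gamma> \<in> multi_indices k"
    using that semi_le_S sum_nonneg[of "{..k}" "\<lambda>j. Dnorm j F"] Dnorm_nonneg
    unfolding Cnorm_eq by force
qed

lemma abs_Dl_le_Cnorm:
  fixes F :: "'a::euclidean_space \<Rightarrow> real" and g :: "real \<Rightarrow> real"
  defines "k \<equiv> holder_order g"
  assumes "\<And>t. 0 < t \<Longrightarrow> t \<le> 1 \<Longrightarrow> 0 < g t" and F: "Cg_bounded g k F"
    and \<gamma>: "set \<gamma> \<subseteq> Basis" "length \<gamma> \<le> k"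
  shows "\<bar>Dl \<gamma> F y\<bar> \<le> Cnorm g F"
proof -
  have "\<bar>Dl \<gamma> F y\<bar> \<le> sup_norm (Dl \<gamma> F)"
    using F \<gamma> by (intro abs_le_sup_norm) (simp add: Cg_bounded_def)
  also have "\<dots> \<le> Dnorm (length \<gamma>) F"
    unfolding Dnorm_def using \<gamma>
    by (intro cSUP_upper bdd_above_finite finite_imageI multi_indices_finite) (auto simp: multi_indices_def)
  also have "\<dots> \<le> Cnorm g F"
    using Cnorm_ge_summands(1)[OF assms(2) F[unfolded k_def]] \<gamma> by (simp add: k_def)
  finally show ?thesis .
qed

lemma holder_quotient_le_Cnorm:
  fixes F :: "'a::euclidean_space \<Rightarrow> real" and g :: "real \<Rightarrow> real"
  defines "k \<equiv> holder_order g"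
  assumes "\<And>t. 0 < t \<Longrightarrow> t \<le> 1 \<Longrightarrow> 0 < g t" and F: "Cg_bounded g k F"
    and "\<gamma> \<in> multi_indices k" "q \<in> holder_quotients k g (Dl \<gamma> F)"
  shows "q \<le> Cnorm g F"
proof -
  have "q \<le> holder_semi k g (Dl \<gamma> F)"
    unfolding holder_semi_def using assms(4,5) F by (intro cSup_upper) (auto simp: Cg_bounded_def)
  also have "\<dots> \<le> Cnorm g F"
    using Cnorm_ge_summands(2)[OF assms(2) F[unfolded k_def]] assms(4) by (simp add: k_def)
  finally show ?thesis .
qed

lemma Cnorm_nonneg:
  fixes F :: "'a::euclidean_space \<Rightarrow> real"
  assumes "\<And>t. 0 < t \<Longrightarrow> t \<le> 1 \<Longrightarrow> 0 < g t" and "Cg_bounded g (holder_order g) F"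
  shows "0 \<le> Cnorm g F"
  using abs_Dl_le_Cnorm[OF assms, of "[]" 0] by simp

lemma Cnorm_le:
  fixes F :: "'a::euclidean_space \<Rightarrow> real" and g :: "real \<Rightarrow> real"
  defines "k \<equiv> holder_order g"
  assumes "\<And>\<gamma> y. set \<gamma> \<subseteq> Basis \<Longrightarrow> length \<gamma> \<le> k \<Longrightarrow> \<bar>Dl \<gamma> F y\<bar> \<le> B1"
    and "\<And>\<gamma> q. \<gamma> \<in> multi_indices k \<Longrightarrow> q \<in> holder_quotients k g (Dl \<gamma> F) \<Longrightarrow> q \<le> B2"
  shows "Cnorm g F \<le> (real k + 1) * B1 + B2"
proof -
  have "Dnorm j F \<le> B1" if "j \<le> k" for j
    unfolding Dnorm_def sup_norm_def using assms(2) that multi_indices_nonempty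
    by (intro cSUP_least) (auto simp: multi_indices_def)
  then have "(\<Sum>j\<le>k. Dnorm j F) \<le> (real k + 1) * B1"
    using sum_mono[of "{..k}" "\<lambda>j. Dnorm j F" "\<lambda>_. B1"] by (simp add: add.commute)
  moreover have "(SUP \<gamma>\<in>multi_indices k. holder_semi k g (Dl \<gamma> F)) \<le> B2"
    unfolding holder_semi_def using assms(3)
    by (intro cSUP_least[OF multi_indices_nonempty] cSup_least[OF holder_quotients_nonempty]) auto
  ultimately show ?thesis by (simp add: Cnorm_def Let_def k_def)
qed

section \<open>Indices\<close>

lemma almost_increasing_powr_antimono:
  assumes gpos: "\<And>t. 0 < t \<Longrightarrow> t \<le> 1 \<Longrightarrow> 0 < g t"
    and "almost_increasing (\<lambda>r. g r / r powr \<alpha>)" and "\<alpha>' \<le> \<alpha>"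
  shows "almost_increasing (\<lambda>r. g r / r powr \<alpha>')"
proof -
  obtain c where c: "0 < c" "c \<le> 1"
    and inc: "\<And>r R. 0 < r \<Longrightarrow> r \<le> R \<Longrightarrow> R \<le> 1 \<Longrightarrow> c * (g r / r powr \<alpha>) \<le> g R / R powr \<alpha>"
    using assms(2) unfolding almost_increasing_def by blast
  have "c * (g r / r powr \<alpha>') \<le> g R / R powr \<alpha>'" if h: "0 < r" "r \<le> R" "R \<le> 1" for r R
  proof -
    have "c * (g r / r powr \<alpha>) * r powr (\<alpha> - \<alpha>') \<le> (g R / R powr \<alpha>) * R powr (\<alpha> - \<alpha>')"
      using inc[OF h] h assms(3) c gpos[of r] gpos[of R]
      by (intro mult_mono powr_mono2) auto
    then show ?thesis using h by (simp add: powr_diff field_simps)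
  qed
  then show ?thesis unfolding almost_increasing_def using c by blast
qed

lemma almost_decreasing_powr_mono:
  assumes gpos: "\<And>t. 0 < t \<Longrightarrow> t \<le> 1 \<Longrightarrow> 0 < g t"
    and "almost_decreasing (\<lambda>r. g r / r powr \<beta>)" and "\<beta> \<le> \<beta>'"
  shows "almost_decreasing (\<lambda>r. g r / r powr \<beta>')"
proof -
  obtain C where C: "1 \<le> C"
    and dec: "\<And>r R. 0 < r \<Longrightarrow> r \<le> R \<Longrightarrow> R \<le> 1 \<Longrightarrow> g R / R powr \<beta> \<le> C * (g r / r powr \<beta>)"
    using assms(2) unfolding almost_decreasing_def by blast
  have "g R / R powr \<beta>' \<le> C * (g r / r powr \<beta>')" if h: "0 < r" "r \<le> R" "R \<le> 1" for r R
  proof -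
    have "(g R / R powr \<beta>) * R powr (\<beta> - \<beta>') \<le> C * (g r / r powr \<beta>) * r powr (\<beta> - \<beta>')"
      using dec[OF h] h assms(3) C gpos[of r] gpos[of R]
      by (intro mult_mono powr_mono2') auto
    then show ?thesis using h by (simp add: powr_diff field_simps)
  qed
  then show ?thesis unfolding almost_decreasing_def using C by blast
qed

lemma powr_le_of_almost_decreasing:
  assumes "g 1 = 1" and "almost_decreasing (\<lambda>r. g r / r powr \<beta>)"
  obtains C where "1 \<le> C" "\<And>t. 0 < t \<Longrightarrow> t \<le> 1 \<Longrightarrow> t powr \<beta> \<le> C * g t"
proof -
  obtain C where C: "1 \<le> C"
    and dec: "\<And>r R. 0 < r \<Longrightarrow> r \<le> R \<Longrightarrow> R \<le> 1 \<Longrightarrow> g R / R powr \<beta> \<le> C * (g r / r powr \<beta>)"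
    using assms(2) unfolding almost_decreasing_def by blast
  have "t powr \<beta> \<le> C * g t" if "0 < t" "t \<le> 1" for t
    using dec[of t 1] that assms(1) by (simp add: field_simps)
  with C show ?thesis by (rule that)
qed

lemma almost_increasing_le_almost_decreasing:
  assumes gpos: "\<And>t. 0 < t \<Longrightarrow> t \<le> 1 \<Longrightarrow> 0 < g t"
    and "almost_increasing (\<lambda>r. g r / r powr \<alpha>)" and "almost_decreasing (\<lambda>r. g r / r powr \<beta>)"
  shows "\<alpha> \<le> \<beta>"
proof (rule ccontr)
  assume "\<not> \<alpha> \<le> \<beta>"
  obtain c where c: "0 < c"
    and inc: "\<And>r R. 0 < r \<Longrightarrow> r \<le> R \<Longrightarrow> R \<le> 1 \<Longrightarrow> c * (g r / r powr \<alpha>) \<le> g R / R powr \<alpha>"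
    using assms(2) unfolding almost_increasing_def by blast
  obtain C where C: "1 \<le> C"
    and dec: "\<And>r R. 0 < r \<Longrightarrow> r \<le> R \<Longrightarrow> R \<le> 1 \<Longrightarrow> g R / R powr \<beta> \<le> C * (g r / r powr \<beta>)"
    using assms(3) unfolding almost_decreasing_def by blast
  define t where "t = min 1 ((c / (2 * C)) powr (1 / (\<alpha> - \<beta>)))"
  have t: "0 < t" "t \<le> 1" using c C by (auto simp: t_def)
  have "c * (g t / t powr \<alpha>) \<le> C * (g t / t powr \<beta>)"
    using inc[of t 1] dec[of t 1] t by simp
  then have "c * t powr \<beta> \<le> C * t powr \<alpha>"
    using t gpos[OF t] by (simp add: field_simps)
  then have "c \<le> C * t powr (\<alpha> - \<beta>)" using t by (simp add: powr_diff field_simps)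
  also have "\<dots> \<le> C * ((c / (2 * C)) powr (1 / (\<alpha> - \<beta>))) powr (\<alpha> - \<beta>)"
    using t C \<open>\<not> \<alpha> \<le> \<beta>\<close> by (intro mult_left_mono powr_mono2) (auto simp: t_def)
  also have "\<dots> = c / 2" using \<open>\<not> \<alpha> \<le> \<beta>\<close> c C by (simp add: powr_powr)
  finally show False using c by simp
qed

lemma lower_index_le_upper_index:
  assumes "\<And>t. 0 < t \<Longrightarrow> t \<le> 1 \<Longrightarrow> 0 < g t"
  shows "lower_index g \<le> upper_index g"
  unfolding lower_index_def upper_index_def
  by (intro Sup_least Inf_greatest) (auto intro: almost_increasing_le_almost_decreasing[OF assms])

lemma almost_increasing_below_lower_index:
  assumes "\<And>t. 0 < t \<Longrightarrow> t \<le> 1 \<Longrightarrow> 0 < g t" and "ereal \<alpha> < lower_index g"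
  shows "almost_increasing (\<lambda>r. g r / r powr \<alpha>)"
proof -
  obtain \<alpha>' where "almost_increasing (\<lambda>r. g r / r powr \<alpha>')" "\<alpha> < \<alpha>'"
    using assms(2) by (auto simp: lower_index_def less_Sup_iff)
  then show ?thesis using almost_increasing_powr_antimono[OF assms(1)] by simp
qed

lemma almost_decreasing_above_upper_index:
  assumes "\<And>t. 0 < t \<Longrightarrow> t \<le> 1 \<Longrightarrow> 0 < g t" and "upper_index g < ereal \<beta>"
  shows "almost_decreasing (\<lambda>r. g r / r powr \<beta>)"
proof -
  obtain \<beta>' where "almost_decreasing (\<lambda>r. g r / r powr \<beta>')" "\<beta>' < \<beta>"
    using assms(2) by (auto simp: upper_index_def Inf_less_iff)
  then show ?thesis using almost_decreasing_powr_mono[OF assms(1)] by simp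
qed

lemma upper_index_nonneg:
  assumes gpos: "\<And>t. 0 < t \<Longrightarrow> t \<le> 1 \<Longrightarrow> 0 < g t" and "g 1 = 1"
    and lim: "(g \<longlongrightarrow> 0) (at_right 0)"
  shows "0 \<le> upper_index g"
  unfolding upper_index_def
proof (rule Inf_greatest, clarify)
  fix \<beta> assume dec: "almost_decreasing (\<lambda>r. g r / r powr \<beta>)"
  show "0 \<le> ereal \<beta>"
  proof (rule ccontr)
    assume "\<not> 0 \<le> ereal \<beta>"
    obtain C where C: "1 \<le> C" and le: "\<And>t. 0 < t \<Longrightarrow> t \<le> 1 \<Longrightarrow> t powr \<beta> \<le> C * g t"
      using powr_le_of_almost_decreasing[OF assms(2) dec] by blast
    have lower: "1 / C \<le> g t" if "0 < t" "t < 1" for t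
    proof -
      have "1 \<le> t powr \<beta>" using that \<open>\<not> 0 \<le> ereal \<beta>\<close> powr_mono2'[of \<beta> t 1] by simp
      then show ?thesis using le[of t] that C by (simp add: field_simps)
    qed
    have "eventually (\<lambda>t. g t < 1 / C) (at_right 0)"
      using order_tendstoD(2)[OF lim] C by simp
    moreover have "eventually (\<lambda>t::real. 0 < t \<and> t < 1) (at_right 0)"
      unfolding eventually_at_right_field by (intro exI[of _ 1]) auto
    ultimately have "eventually (\<lambda>t::real. False) (at_right 0)"
      by eventually_elim (use lower in force)
    then show False by simp
  qed
qed

lemma holder_order_eqI:
  assumes "lower_index g = ereal m" "real k < m" "m \<le> real k + 1"
  shows "holder_order g = k"
  unfolding holder_order_def assms(1)
proof (rule the_equality)
  fix j :: nat assume "ereal (real j) < ereal m \<and> ereal m \<le> ereal (real j + 1)"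
  then have "real j < real k + 1" "real k < real j + 1" using assms(2,3) by auto
  then show "j = k" by linarith
qed (use assms in auto)

lemma almost_decreasing_at_holder_order_succ:
  fixes g :: "real \<Rightarrow> real"
  defines "k \<equiv> holder_order g"
  assumes gpos: "\<And>t. 0 < t \<Longrightarrow> t \<le> 1 \<Longrightarrow> 0 < g t"
    and I: "index_interval g \<subseteq> {0<..} - \<int>"
    and "upper_index g \<noteq> -\<infinity>" and "lower_index g \<noteq> \<infinity>"
  shows "almost_decreasing (\<lambda>r. g r / r powr (real k + 1))"
proof -
  have no_int: False if "x \<in> \<int>" "lower_index g \<le> ereal x" "ereal x \<le> upper_index g" for x
    using I that by (auto simp: index_interval_def)
  obtain M where M: "upper_index g = ereal M"
  proof (cases "upper_index g")
    case PInf
    obtain a where "lower_index g \<le> ereal a"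
      using \<open>lower_index g \<noteq> \<infinity>\<close> by (cases "lower_index g") auto
    then have "lower_index g \<le> ereal (of_int \<lceil>a\<rceil>)"
      by (meson ereal_less_eq(3) le_of_int_ceiling order.trans)
    then show ?thesis using no_int[of "of_int \<lceil>a\<rceil>"] PInf by simp
  qed (use \<open>upper_index g \<noteq> -\<infinity>\<close> in auto)
  obtain m where m: "lower_index g = ereal m"
  proof (cases "lower_index g")
    case MInf
    then show ?thesis using no_int[of "of_int \<lfloor>M\<rfloor>"] M by simp
  qed (use \<open>lower_index g \<noteq> \<infinity>\<close> in auto)
  have "m \<le> M" using lower_index_le_upper_index[of g, OF gpos] m M by simp
  then have "m \<in> index_interval g" using m M by (simp add: index_interval_def)
  then have "0 < m" "m \<notin> \<int>" using I by auto
  then have "real (nat \<lfloor>m\<rfloor>) < m" "m < real (nat \<lfloor>m\<rfloor>) + 1"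
    using of_int_floor_le[of m] by (auto simp: order.order_iff_strict)
  then have "k = nat \<lfloor>m\<rfloor>" unfolding k_def by (intro holder_order_eqI[OF m]) auto
  have "M < real k + 1"
  proof (rule ccontr)
    assume "\<not> M < real k + 1"
    then show False using no_int[of "real k + 1"] m M \<open>m < real (nat \<lfloor>m\<rfloor>) + 1\<close> \<open>k = nat \<lfloor>m\<rfloor>\<close> by simp
  qed
  then show ?thesis using almost_decreasing_above_upper_index[of g, OF gpos] M by simp
qed

lemma holder_weight_lower_bound:
  assumes "g 1 = 1" and "almost_decreasing (\<lambda>r. g r / r powr (real k + 1))"
  obtains c0 where "0 < c0" "\<And>t. 0 < t \<Longrightarrow> t \<le> 1 \<Longrightarrow> c0 * t \<le> g t * t powr - real k"
proof -
  obtain C where C: "1 \<le> C" "\<And>t. 0 < t \<Longrightarrow> t \<le> 1 \<Longrightarrow> t powr (real k + 1) \<le> C * g t"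
    using powr_le_of_almost_decreasing[of g, OF assms] by blast
  have "1 / C * t \<le> g t * t powr - real k" if "0 < t" "t \<le> 1" for t
  proof -
    have "t = t powr (real k + 1) * t powr - real k" using that by (simp flip: powr_add)
    also have "\<dots> \<le> C * g t * t powr - real k" using C(2)[OF that] by (intro mult_right_mono) auto
    finally show ?thesis using C(1) by (simp add: field_simps)
  qed
  moreover have "0 < 1 / C" using C(1) by simp
  ultimately show ?thesis using that by blast
qed

lemma holder_weight_le_square:
  assumes "g 1 = 1" and "almost_increasing (\<lambda>r. g r / r powr (real k + 2))"
  obtains C where "\<And>t. 0 < t \<Longrightarrow> t \<le> 1 \<Longrightarrow> g t * t powr - real k \<le> C * t\<^sup>2"
proof -
  obtain c where "0 < c"
    and inc: "\<And>r R. 0 < r \<Longrightarrow> r \<le> R \<Longrightarrow> R \<le> 1 \<Longrightarrow>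
                c * (g r / r powr (real k + 2)) \<le> g R / R powr (real k + 2)"
    using assms(2) unfolding almost_increasing_def by blast
  have "g t * t powr - real k \<le> 1 / c * t\<^sup>2" if "0 < t" "t \<le> 1" for t
  proof -
    have "g t * t powr - real k = g t / t powr (real k + 2) * t powr 2"
      using that by (simp add: powr_add powr_minus field_simps)
    also have "\<dots> \<le> 1 / c * t\<^sup>2"
      using inc[of t 1] assms(1) \<open>0 < c\<close> that by (simp add: powr_realpow field_simps)
    finally show ?thesis .
  qed
  then show ?thesis by (rule that)
qed

lemma admissible_product_pos:
  assumes "admissible_modulus \<psi>" "admissible_order_function \<phi>" "0 < t" "t \<le> 1"
  shows "0 < \<phi> t * \<psi> t"
  using assms by (simp add: admissible_modulus_def admissible_order_function_def)

lemma admissible_order_function_bounded_on_unit: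
  assumes "admissible_order_function \<phi>"
  obtains a where "0 < a" "\<And>t. 0 < t \<Longrightarrow> t \<le> 1 \<Longrightarrow> a * \<phi> t \<le> 1"
proof -
  obtain \<delta>1 a1 where "0 < a1" "0 < \<delta>1"
    and scale: "\<And>s r. 1 \<le> s \<Longrightarrow> 0 < r \<Longrightarrow> a1 * s powr (2 * \<delta>1) * \<phi> r \<le> \<phi> (s * r)"
    using assms unfolding admissible_order_function_def by metis
  have "a1 * \<phi> t \<le> 1" if "0 < t" "t \<le> 1" for t
  proof -
    have "1 \<le> (1 / t) powr (2 * \<delta>1)"
      using that \<open>0 < \<delta>1\<close> by (intro ge_one_powr_ge_zero) auto
    moreover have "0 < \<phi> t" using assms that by (simp add: admissible_order_function_def)
    ultimately have "a1 * \<phi> t \<le> a1 * (1 / t) powr (2 * \<delta>1) * \<phi> t"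
      using \<open>0 < a1\<close> by (simp add: mult_left_le)
    also have "\<dots> \<le> 1"
      using scale[of "1 / t" t] that assms by (simp add: admissible_order_function_def)
    finally show ?thesis .
  qed
  with \<open>0 < a1\<close> that show ?thesis by blast
qed

lemma tendsto_order_function_mult_modulus:
  assumes "admissible_modulus \<psi>" and "admissible_order_function \<phi>"
  shows "((\<lambda>r. \<phi> r * \<psi> r) \<longlongrightarrow> 0) (at_right 0)"
proof -
  obtain a where "0 < a" and bound: "\<And>t. 0 < t \<Longrightarrow> t \<le> 1 \<Longrightarrow> a * \<phi> t \<le> 1"
    using admissible_order_function_bounded_on_unit[OF assms(2)] by blast
  have "eventually (\<lambda>t::real. 0 < t \<and> t < 1) (at_right 0)"
    unfolding eventually_at_right_field by (intro exI[of _ 1]) auto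
  then have "eventually (\<lambda>t. norm (\<phi> t * \<psi> t) \<le> \<psi> t / a) (at_right 0)"
  proof eventually_elim
    case (elim t)
    then have "0 < \<phi> t" "0 < \<psi> t"
      using assms by (auto simp: admissible_order_function_def admissible_modulus_def)
    then show ?case
      using bound[of t] elim \<open>0 < a\<close> by (simp add: abs_mult field_simps mult_right_le_one_le)
  qed
  moreover have "((\<lambda>t. \<psi> t / a) \<longlongrightarrow> 0) (at_right 0)"
    using assms(1) tendsto_divide_zero by (auto simp: admissible_modulus_def)
  ultimately show ?thesis by (rule Lim_null_comparison)
qed

section \<open>Infinite lower index\<close>

lemma Dl_eq_zero_if_top_order_constant:
  fixes u :: "'a::euclidean_space \<Rightarrow> real"
  assumes du: "Dl_differentiable_upto k u"
    and bu: "\<And>\<gamma>. set \<gamma> \<subseteq> Basis \<Longrightarrow> length \<gamma> \<le> k \<Longrightarrow> bounded_fun (Dl \<gamma> u)"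
    and top: "\<And>\<gamma> x y. \<gamma> \<in> multi_indices k \<Longrightarrow> Dl \<gamma> u x = Dl \<gamma> u y"
    and \<gamma>: "set \<gamma> \<subseteq> Basis" "0 < length \<gamma>" "length \<gamma> \<le> k"
  shows "Dl \<gamma> u x = 0"
proof -
  have zero_if_constant: "Dl (v # \<beta>) u x = 0"
    if "set (v # \<beta>) \<subseteq> Basis" "length (v # \<beta>) \<le> k" "\<And>x y. Dl (v # \<beta>) u x = Dl (v # \<beta>) u y"
    for v \<beta> x
  proof (rule partial_eq_zero_if_constant[of "Dl \<beta> u"])
    show "(\<lambda>t. Dl \<beta> u (y + t *\<^sub>R v)) differentiable (at 0)" for y
      using du that(1,2) by (simp add: Dl_differentiable_upto_def)
    show "bounded_fun (Dl \<beta> u)" using bu that(1,2) by simp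
    show "pd v (Dl \<beta> u) y = Dl (v # \<beta>) u x" for y using that(3)[of y x] by simp
  qed
  have all_constant: "Dl \<beta> u x = Dl \<beta> u y" if "set \<beta> \<subseteq> Basis" "length \<beta> \<le> k" for \<beta> x y
    using that
  proof (induction "k - length \<beta>" arbitrary: \<beta> x y)
    case 0
    then have "\<beta> \<in> multi_indices k" by (simp add: multi_indices_def)
    then show ?case by (rule top)
  next
    case (Suc n)
    show ?case
    proof (rule constant_if_partials_zero[of "Dl \<beta> u"])
      show "(\<lambda>t. Dl \<beta> u (y + t *\<^sub>R v)) differentiable (at 0)" if "v \<in> Basis" for v y
        using du Suc that by (simp add: Dl_differentiable_upto_def)
      show "pd v (Dl \<beta> u) y = 0" if "v \<in> Basis" for v y
      proof -
        have "Dl (v # \<beta>) u x = Dl (v # \<beta>) u y" for x y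
          using Suc.hyps(1)[of "v # \<beta>"] Suc.hyps(2) Suc.prems that by simp
        then show ?thesis using zero_if_constant[of v \<beta> y] Suc.hyps(2) Suc.prems that by auto
      qed
    qed
  qed
  obtain v \<beta> where "\<gamma> = v # \<beta>" using \<gamma>(2) by (cases \<gamma>) auto
  then show ?thesis using zero_if_constant all_constant \<gamma> by blast
qed

lemma constant_if_holder_weight_le_square:
  assumes gpos: "\<And>t. 0 < t \<Longrightarrow> t \<le> 1 \<Longrightarrow> 0 < g t" and "holder_estimate g k F"
    and square: "\<And>t. 0 < t \<Longrightarrow> t \<le> 1 \<Longrightarrow> g t * t powr - real k \<le> C * t\<^sup>2"
  shows "F y = F x"
proof -
  obtain K where K: "\<And>x h. 0 < norm h \<Longrightarrow> norm h \<le> 1 \<Longrightarrow>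
      \<bar>F (x + h) - F x\<bar> \<le> K * (g (norm h) * norm h powr - real k)"
    using assms(2) unfolding holder_estimate_def by blast
  have "\<bar>F (x + h) - F x\<bar> \<le> max K 0 * C * (norm h)\<^sup>2" if h: "0 < norm h" "norm h \<le> 1" for x h
  proof -
    have "0 \<le> g (norm h) * norm h powr - real k" using gpos[OF h] by simp
    then have "\<bar>F (x + h) - F x\<bar> \<le> max K 0 * (g (norm h) * norm h powr - real k)"
      using K[OF h, of x] by (meson max.cobounded1 mult_right_mono order.trans)
    also have "\<dots> \<le> max K 0 * (C * (norm h)\<^sup>2)"
      using square[OF h] by (intro mult_left_mono) auto
    finally show ?thesis by (simp add: mult.assoc)
  qed
  then show ?thesis by (rule constant_if_increments_quadratic)
qed

lemma Cnorm_le_sup_norm_if_lower_index_infinite: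
  fixes u :: "'a::euclidean_space \<Rightarrow> real" and g :: "real \<Rightarrow> real"
  defines "k \<equiv> holder_order g"
  assumes gpos: "\<And>t. 0 < t \<Longrightarrow> t \<le> 1 \<Longrightarrow> 0 < g t" and "g 1 = 1"
    and "lower_index g = \<infinity>"
    and du: "Dl_differentiable_upto k u" and bu: "Cg_bounded g k u"
  shows "Cnorm g u \<le> (real k + 1) * sup_norm u"
proof -
  have "almost_increasing (\<lambda>r. g r / r powr (real k + 2))"
    using almost_increasing_below_lower_index[of g, OF gpos] assms(4) by simp
  then obtain C where square: "\<And>t. 0 < t \<Longrightarrow> t \<le> 1 \<Longrightarrow> g t * t powr - real k \<le> C * t\<^sup>2"
    using holder_weight_le_square[of g, OF \<open>g 1 = 1\<close>] by blast
  have top: "Dl \<gamma> u x = Dl \<gamma> u y" if "\<gamma> \<in> multi_indices k" for \<gamma> x y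
    using bu that square
    by (intro constant_if_holder_weight_le_square[of g, OF gpos])
       (auto simp: Cg_bounded_def bdd_above_holder_quotients_iff gpos)
  have bounded_u: "bounded_fun u" using bu by (auto simp: Cg_bounded_def dest: spec[of _ "[]"])
  have "\<bar>Dl \<gamma> u y\<bar> \<le> sup_norm u" if "set \<gamma> \<subseteq> Basis" "length \<gamma> \<le> k" for \<gamma> y
  proof (cases "\<gamma> = []")
    case True
    then show ?thesis using abs_le_sup_norm[OF bounded_u] by simp
  next
    case False
    then have "Dl \<gamma> u y = 0"
      using Dl_eq_zero_if_top_order_constant[OF du _ top] bu that by (auto simp: Cg_bounded_def)
    then show ?thesis using abs_le_sup_norm[OF bounded_u, of 0] by simp
  qed
  moreover have "q \<le> 0" if \<gamma>: "\<gamma> \<in> multi_indices k" and q: "q \<in> holder_quotients k g (Dl \<gamma> u)" for \<gamma> q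
  proof -
    obtain x h where "q = \<bar>Dl \<gamma> u (x + h) - Dl \<gamma> u x\<bar> / (g (norm h) * norm h powr - real k)"
      using q unfolding holder_quotients_def by blast
    then show ?thesis using top[OF \<gamma>, of "x + h" x] by simp
  qed
  ultimately show ?thesis using Cnorm_le[of g u "sup_norm u" 0] by (simp add: k_def)
qed

lemma uniform_Cnorm_bound_if_lower_index_infinite:
  fixes g :: "real \<Rightarrow> real" and S :: "(('a::euclidean_space \<Rightarrow> real) \<times> 'b) set"
    and A :: "('a \<Rightarrow> real) \<Rightarrow> 'b \<Rightarrow> real"
  assumes gpos: "\<And>t. 0 < t \<Longrightarrow> t \<le> 1 \<Longrightarrow> 0 < g t" and "g 1 = 1"
    and "lower_index g = \<infinity>" and reg: "\<And>u f. (u, f) \<in> S \<Longrightarrow> u \<in> Cg g"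
    and sup_le: "\<And>u f. (u, f) \<in> S \<Longrightarrow> sup_norm u \<le> A u f"
  shows "\<exists>C. \<forall>(u, f)\<in>S. Cnorm g u \<le> C * A u f"
proof -
  have "Cnorm g u \<le> (real (holder_order g) + 1) * A u f" if "(u, f) \<in> S" for u f
  proof -
    have "Cnorm g u \<le> (real (holder_order g) + 1) * sup_norm u"
      using Cnorm_le_sup_norm_if_lower_index_infinite[where g = g, OF gpos \<open>g 1 = 1\<close> assms(3)]
        CgD[OF reg[OF that]] by blast
    also have "\<dots> \<le> (real (holder_order g) + 1) * A u f"
      using sup_le[OF that] by (intro mult_left_mono) auto
    finally show ?thesis .
  qed
  then show ?thesis by blast
qed

section \<open>Localization\<close>

lemma Dl_mult_eta_rx_eq:
  fixes u :: "'a::euclidean_space \<Rightarrow> real"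
  assumes "cutoff \<eta>" "0 < r" "y \<in> ball x0 r"
  shows "Dl \<gamma> (\<lambda>x. u x * eta_rx \<eta> r x0 x) y = Dl \<gamma> u y"
  using assms eta_rx_eq_one by (intro Dl_cong_open[of "ball x0 r"]) auto

lemma abs_Dl_le_of_localized:
  fixes u :: "'a::euclidean_space \<Rightarrow> real" and g :: "real \<Rightarrow> real"
  defines "k \<equiv> holder_order g"
  assumes gpos: "\<And>t. 0 < t \<Longrightarrow> t \<le> 1 \<Longrightarrow> 0 < g t" and "cutoff \<eta>" "0 < r"
    and local_Cg: "\<And>x0. Cg_bounded g k (\<lambda>x. u x * eta_rx \<eta> r x0 x)"
    and local_bound: "\<And>x0. Cnorm g (\<lambda>x. u x * eta_rx \<eta> r x0 x) \<le> B"
    and "set \<gamma> \<subseteq> Basis" "length \<gamma> \<le> k"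
  shows "\<bar>Dl \<gamma> u y\<bar> \<le> B"
proof -
  have "\<bar>Dl \<gamma> (\<lambda>x. u x * eta_rx \<eta> r y x) y\<bar> \<le> Cnorm g (\<lambda>x. u x * eta_rx \<eta> r y x)"
    using abs_Dl_le_Cnorm[OF gpos local_Cg[unfolded k_def]] assms(7,8) by (simp add: k_def)
  then show ?thesis
    using Dl_mult_eta_rx_eq[OF assms(3,4)] local_bound[of y] assms(4) by simp
qed

lemma holder_quotient_le_of_localized:
  fixes u :: "'a::euclidean_space \<Rightarrow> real" and g :: "real \<Rightarrow> real"
  defines "k \<equiv> holder_order g"
  assumes gpos: "\<And>t. 0 < t \<Longrightarrow> t \<le> 1 \<Longrightarrow> 0 < g t" and "cutoff \<eta>" "0 < r"
    and local_Cg: "\<And>x0. Cg_bounded g k (\<lambda>x. u x * eta_rx \<eta> r x0 x)"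
    and local_bound: "\<And>x0. Cnorm g (\<lambda>x. u x * eta_rx \<eta> r x0 x) \<le> B"
    and \<gamma>: "\<gamma> \<in> multi_indices k" and h: "0 < norm h" "norm h < r" "norm h \<le> 1"
  shows "\<bar>Dl \<gamma> u (x + h) - Dl \<gamma> u x\<bar> / (g (norm h) * norm h powr - real k) \<le> B"
proof -
  let ?F = "Dl \<gamma> (\<lambda>y. u y * eta_rx \<eta> r x y)"
  have "x \<in> ball x r" "x + h \<in> ball x r" using h assms(4) by (auto simp: dist_norm)
  then have "?F x = Dl \<gamma> u x" "?F (x + h) = Dl \<gamma> u (x + h)"
    using Dl_mult_eta_rx_eq[OF assms(3,4)] by auto
  moreover have "\<bar>?F (x + h) - ?F x\<bar> / (g (norm h) * norm h powr - real k) \<in> holder_quotients k g ?F"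
    unfolding holder_quotients_def using h by blast
  then have "\<bar>?F (x + h) - ?F x\<bar> / (g (norm h) * norm h powr - real k) \<le> Cnorm g (\<lambda>y. u y * eta_rx \<eta> r x y)"
    using holder_quotient_le_Cnorm[OF gpos local_Cg[unfolded k_def]] \<gamma> by (simp add: k_def)
  ultimately show ?thesis using local_bound[of x] by simp
qed

lemma holder_quotient_le_of_sup_bound:
  assumes "0 < c0" and low: "\<And>t. 0 < t \<Longrightarrow> t \<le> 1 \<Longrightarrow> c0 * t \<le> g t * t powr - real k"
    and bound: "\<And>y. \<bar>F y\<bar> \<le> B" and "0 < r" "r \<le> norm h" "norm h \<le> 1"
  shows "\<bar>F (x + h) - F x\<bar> / (g (norm h) * norm h powr - real k) \<le> 2 * B / (c0 * r)"
proof -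
  have "\<bar>F (x + h) - F x\<bar> \<le> 2 * B" using bound[of "x + h"] bound[of x] by linarith
  moreover have "c0 * r \<le> g (norm h) * norm h powr - real k"
    using low[of "norm h"] mult_left_mono[of r "norm h" c0] assms(1,4-6) by linarith
  moreover have "0 \<le> B" using bound[of x] by linarith
  ultimately show ?thesis using assms(1,4) by (intro frac_le) auto
qed

lemma Cnorm_le_two_scale:
  fixes u :: "'a::euclidean_space \<Rightarrow> real" and g :: "real \<Rightarrow> real"
  defines "k \<equiv> holder_order g"
  assumes gpos: "\<And>t. 0 < t \<Longrightarrow> t \<le> 1 \<Longrightarrow> 0 < g t"
    and "0 < c0" and low: "\<And>t. 0 < t \<Longrightarrow> t \<le> 1 \<Longrightarrow> c0 * t \<le> g t * t powr - real k"
    and du: "Dl_differentiable_upto k u" and bu: "Cg_bounded g k u"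
    and "cutoff \<eta>" "0 < r1" "0 < r2"
    and bound1: "\<And>x0. Cnorm g (\<lambda>x. u x * eta_rx \<eta> r1 x0 x) \<le> B1"
    and bound2: "\<And>x0. Cnorm g (\<lambda>x. u x * eta_rx \<eta> r2 x0 x) \<le> B2"
  shows "Cnorm g u \<le> (real k + 2) * B1 + 2 * B2 / (c0 * r1)"
proof -
  have local_Cg: "Cg_bounded g k (\<lambda>x. u x * eta_rx \<eta> r x0 x)" if "0 < r" for r x0
    using Cg_bounded_mult_eta_rx[OF gpos assms(3) low du bu assms(7) that] .
  have sup_bound: "\<bar>Dl \<gamma> u y\<bar> \<le> B"
    if "0 < r" "\<And>x0. Cnorm g (\<lambda>x. u x * eta_rx \<eta> r x0 x) \<le> B" "set \<gamma> \<subseteq> Basis" "length \<gamma> \<le> k"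
    for r B \<gamma> y
    using that local_Cg[OF that(1)]
    by (intro abs_Dl_le_of_localized[where g = g, OF gpos assms(7)]) (simp_all add: k_def)
  have "0 \<le> B2"
    using Cnorm_nonneg[OF gpos local_Cg[OF assms(9), unfolded k_def]] bound2 order.trans by blast
  then have far_nonneg: "0 \<le> 2 * B2 / (c0 * r1)" using assms(3,8) by simp
  have "q \<le> B1 + 2 * B2 / (c0 * r1)"
    if \<gamma>: "\<gamma> \<in> multi_indices k" and q_mem: "q \<in> holder_quotients k g (Dl \<gamma> u)" for \<gamma> q
  proof -
    obtain x h where q: "q = \<bar>Dl \<gamma> u (x + h) - Dl \<gamma> u x\<bar> / (g (norm h) * norm h powr - real k)"
      and h: "0 < norm h" "norm h \<le> 1"
      using q_mem unfolding holder_quotients_def by blast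
    show ?thesis
    proof (cases "norm h < r1")
      case True
      then have "q \<le> B1"
        unfolding q k_def
        using holder_quotient_le_of_localized[OF gpos assms(7,8) local_Cg[OF assms(8), unfolded k_def] bound1]
          \<gamma> h by (simp add: k_def)
      then show ?thesis using far_nonneg by linarith
    next
      case False
      have "q \<le> 2 * B2 / (c0 * r1)"
        unfolding q using sup_bound[OF assms(9) bound2] \<gamma> h False assms(8)
        by (intro holder_quotient_le_of_sup_bound[OF assms(3) low]) (auto simp: multi_indices_def)
      then show ?thesis using sup_bound[OF assms(8) bound1, of "[]" x] by simp
    qed
  qed
  moreover have "\<bar>Dl \<gamma> u y\<bar> \<le> B1" if "set \<gamma> \<subseteq> Basis" "length \<gamma> \<le> k" for \<gamma> y
    using sup_bound[OF assms(8) bound1] that .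
  ultimately have "Cnorm g u \<le> (real k + 1) * B1 + (B1 + 2 * B2 / (c0 * r1))"
    using Cnorm_le[of g u B1 "B1 + 2 * B2 / (c0 * r1)"] by (simp add: k_def)
  then show ?thesis by (simp add: algebra_simps)
qed

lemma uniform_Cnorm_bound_of_localized:
  fixes g :: "real \<Rightarrow> real" and S :: "(('a::euclidean_space \<Rightarrow> real) \<times> 'b) set"
    and A :: "('a \<Rightarrow> real) \<Rightarrow> 'b \<Rightarrow> real"
  defines "k \<equiv> holder_order g"
  assumes gpos: "\<And>t. 0 < t \<Longrightarrow> t \<le> 1 \<Longrightarrow> 0 < g t"
    and "0 < c0" and low: "\<And>t. 0 < t \<Longrightarrow> t \<le> 1 \<Longrightarrow> c0 * t \<le> g t * t powr - real k"
    and "cutoff \<eta>" and reg: "\<And>u f. (u, f) \<in> S \<Longrightarrow> u \<in> Cg g"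
    and loc: "\<forall>\<epsilon>>0. \<exists>r>0. \<exists>c1\<ge>1. \<forall>(u, f)\<in>S. \<forall>x0.
                Cnorm g (\<lambda>x. u x * eta_rx \<eta> r x0 x) \<le> c1 * A u f + \<epsilon> * Cnorm g u"
  shows "\<exists>C. \<forall>(u, f)\<in>S. Cnorm g u \<le> C * A u f"
proof -
  define \<epsilon>1 where "\<epsilon>1 = 1 / (4 * (real k + 2))"
  obtain r1 c1 where "0 < r1" and bound1: "\<And>u f x0. (u, f) \<in> S \<Longrightarrow>
      Cnorm g (\<lambda>x. u x * eta_rx \<eta> r1 x0 x) \<le> c1 * A u f + \<epsilon>1 * Cnorm g u"
    using loc[rule_format, of \<epsilon>1] unfolding \<epsilon>1_def by fastforce
  \<comment> \<open>The large increments carry the weight \<open>2 / (c0 * r1)\<close>, so the second scale must be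
    chosen after \<open>r1\<close>.\<close>
  define \<epsilon>2 where "\<epsilon>2 = c0 * r1 / 8"
  obtain r2 c2 where "0 < r2" and bound2: "\<And>u f x0. (u, f) \<in> S \<Longrightarrow>
      Cnorm g (\<lambda>x. u x * eta_rx \<eta> r2 x0 x) \<le> c2 * A u f + \<epsilon>2 * Cnorm g u"
    using loc[rule_format, of \<epsilon>2] \<open>0 < c0\<close> \<open>0 < r1\<close> unfolding \<epsilon>2_def by fastforce
  define X where "X = (real k + 2) * c1 + 2 * c2 / (c0 * r1)"
  have "Cnorm g u \<le> 2 * X * A u f" if "(u, f) \<in> S" for u f
  proof -
    from CgD[OF reg[OF that]] have du: "Dl_differentiable_upto k u" and bu: "Cg_bounded g k u"
      unfolding k_def .
    have "Cnorm g u \<le> (real k + 2) * (c1 * A u f + \<epsilon>1 * Cnorm g u)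
                      + 2 * (c2 * A u f + \<epsilon>2 * Cnorm g u) / (c0 * r1)"
      unfolding k_def
      by (rule Cnorm_le_two_scale[where g = g, OF gpos \<open>0 < c0\<close> low[unfolded k_def]
            du[unfolded k_def] bu[unfolded k_def] \<open>cutoff \<eta>\<close> \<open>0 < r1\<close> \<open>0 < r2\<close>
            bound1[OF that] bound2[OF that]])
    also have "\<dots> = X * A u f + ((real k + 2) * \<epsilon>1) * Cnorm g u + (2 * \<epsilon>2 / (c0 * r1)) * Cnorm g u"
      using \<open>0 < c0\<close> \<open>0 < r1\<close> unfolding X_def by (simp add: field_simps)
    also have "(real k + 2) * \<epsilon>1 = 1 / 4" unfolding \<epsilon>1_def by simp
    also have "2 * \<epsilon>2 / (c0 * r1) = 1 / 4" unfolding \<epsilon>2_def using \<open>0 < c0\<close> \<open>0 < r1\<close> by simp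
    finally show ?thesis by simp
  qed
  then show ?thesis by blast
qed

theorem proposition4p1:
  fixes \<psi> \<phi> :: "real \<Rightarrow> real"
    and \<eta> :: "'a::euclidean_space \<Rightarrow> real"
    and S :: "(('a \<Rightarrow> real) \<times> ('a \<Rightarrow> real)) set"
  assumes "admissible_modulus \<psi>"
    and "admissible_order_function \<phi>"
    and "cutoff \<eta>"
    and "index_interval \<psi> \<subseteq> {0<..<1}"
    and "index_interval (\<lambda>r. \<phi> r * \<psi> r) \<subseteq> {0<..<1} \<union> {1<..<2} \<union> {2<..<3}"
    and "\<forall>(u, f)\<in>S. u \<in> Cg (\<lambda>r. \<phi> r * \<psi> r) \<and> f \<in> Cg \<psi>"
    and "\<forall>\<epsilon>>0. \<exists>r>0. \<exists>c1\<ge>1. \<forall>(u, f)\<in>S. \<forall>x0.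
           Cnorm (\<lambda>r. \<phi> r * \<psi> r) (\<lambda>x. u x * eta_rx \<eta> r x0 x)
             \<le> c1 * (Cnorm \<psi> f + sup_norm u) + \<epsilon> * Cnorm (\<lambda>r. \<phi> r * \<psi> r) u"
  shows "\<exists>C. \<forall>(u, f)\<in>S. Cnorm (\<lambda>r. \<phi> r * \<psi> r) u \<le> C * (Cnorm \<psi> f + sup_norm u)"
proof -
  define g where "g = (\<lambda>r. \<phi> r * \<psi> r)"
  have gpos: "\<And>t. 0 < t \<Longrightarrow> t \<le> 1 \<Longrightarrow> 0 < g t" and "g 1 = 1"
    using admissible_product_pos[OF assms(1,2)] assms(1,2)
    by (simp_all add: g_def admissible_modulus_def admissible_order_function_def)
  have "0 \<le> upper_index g"
    using upper_index_nonneg[of g, OF gpos \<open>g 1 = 1\<close>] tendsto_order_function_mult_modulus[OF assms(1,2)]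
    by (simp add: g_def)
  have "{0<..<1} \<union> {1<..<2} \<union> {2<..<3} \<subseteq> {0::real<..} - \<int>"
    by (auto elim!: Ints_cases)
  then have I: "index_interval g \<subseteq> {0<..} - \<int>"
    using assms(5) unfolding g_def by blast
  have reg: "u \<in> Cg g" "sup_norm u \<le> Cnorm \<psi> f + sup_norm u" if "(u, f) \<in> S" for u f
    using assms(1,6) that Cnorm_nonneg[of \<psi> f] CgD(2)[of f \<psi>]
    by (auto simp: g_def admissible_modulus_def)
  have "\<exists>C. \<forall>(u, f)\<in>S. Cnorm g u \<le> C * (Cnorm \<psi> f + sup_norm u)"
  proof (cases "lower_index g = \<infinity>")
    case True
    show ?thesis
      by (rule uniform_Cnorm_bound_if_lower_index_infinite[where g = g,
            OF gpos \<open>g 1 = 1\<close> True reg])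
  next
    case False
    then have "almost_decreasing (\<lambda>r. g r / r powr (real (holder_order g) + 1))"
      using almost_decreasing_at_holder_order_succ[of g, OF gpos I] \<open>0 \<le> upper_index g\<close> by auto
    then obtain c0 where "0 < c0"
      and low: "\<And>t. 0 < t \<Longrightarrow> t \<le> 1 \<Longrightarrow> c0 * t \<le> g t * t powr - real (holder_order g)"
      using holder_weight_lower_bound[of g, OF \<open>g 1 = 1\<close>] by blast
    show ?thesis
      by (rule uniform_Cnorm_bound_of_localized[where g = g and A = "\<lambda>u f. Cnorm \<psi> f + sup_norm u",
            OF gpos \<open>0 < c0\<close> low assms(3) reg(1)])
        (use assms(7) in \<open>simp_all add: g_def\<close>)
  qed
  then show ?thesis unfolding g_def .
qed

end
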